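(* Assume the setting below with $h$ taking values in $[0,1]$, $n\ge 2m$, $\delta\in(0,1)$, and write $k=\lfloor n/m\rfloor$, $k'=\lfloor n/(2m)\rfloor$, $L=\log(2/\delta)$. If $\eta$ is symmetric, then each of the following holds with probability at least $1-\delta$: \[ U_{n}-\theta\le\sqrt{\frac{2W_{n}}{k}L}+\sqrt{\frac{1}{k}\sqrt{\frac{1}{2k'}}\,L^{3/2}}+\frac{4}{3k}L, \tag{H} \] \[ U_{n}-\theta\le\sqrt{\frac{2W_{n}}{k}L}+\left(\frac{\sqrt{2}}{2}+\frac{\sqrt{42}}{6}\right)\sqrt{\frac{2}{k\,k'}}\,L+\frac{4}{3k}L. \tag{B} \] More generally, (H) and (B) each hold with probability at least $1-\delta$ when $U_n-\theta$ is replaced by $\theta-U_n$, when $W_n$ is replaced by $\tilde W_n$ (in which case symmetry of $\eta$ is not needed), or when both substitutions are made simultaneously.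
   Context: Let $\mathbb{X}\subseteq\mathbb{R}^d$ and let $\bm X_1,\dots,\bm X_n\in\mathbb{X}$ be IID with law $F$. Let $m\ge1$ and let $h:\mathbb{X}^m\to[0,1]$ be a measurable symmetric kernel of order $m$ (invariant under every permutation of its $m$ arguments). Let $\theta=\mathbb{E}_F h(\bm X_1,\dots,\bm X_m)$, $\sigma^2=\mathbb{V}_F h(\bm X_1,\dots,\bm X_m)$, and the U-statistic $U_n=\binom{n}{m}^{-1}\sum_{1\le i_1<\dots<i_m\le n}h(\bm X_{i_1},\dots,\bm X_{i_m})$. Define \[ \eta(\bm x_1,\dots,\bm x_{2m})=\tfrac12\left[h(\bm x_1,\dots,\bm x_m)-h(\bm x_{m+1},\dots,\bm x_{2m})\right]^2 , \] call $\eta$ symmetric if it is invariant under every permutation of its $2m$ arguments, and let $\tilde\eta(\bm x_1,\dots,\bm x_{2m})=\frac{1}{(2m)!}\sum_{\pi\in\Pi_{2m}}\eta(\bm x_{\pi(1)},\dots,\bm x_{\pi(2m)})$, $\Pi_{2m}$ the permutations of $\{1,\dots,2m\}$. Let $\mathbb{K}_{2m}$ be the set of $2m$-element subsets $\{\kappa(1)<\dots<\kappa(2m)\}$ of $\{1,\dots,n\}$, $W_n=\binom{n}{2m}^{-1}\sum_{\kappa\in\mathbb{K}_{2m}}\eta(\bm X_{\kappa(1)},\dots,\bm X_{\kappa(2m)})$ and $\tilde W_n=\binom{n}{2m}^{-1}\sum_{\kappa\in\mathbb{K}_{2m}}\tilde\eta(\bm X_{\kappa(1)},\dots,\bm X_{\kappa(2m)})$.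 $\lfloor\cdot\rfloor$ is the floor function. *)

theory Defs
  imports "HOL-Probability.Probability" "HOL-Combinatorics.Permutations"
begin

text \<open>Arguments of a kernel are functions on the index set {..<r}; the sample is a
function Y :: nat => 'x with Y i the i-th observation (indices 0..n-1).\<close>

definition eta :: "((nat \<Rightarrow> 'x) \<Rightarrow> real) \<Rightarrow> nat \<Rightarrow> (nat \<Rightarrow> 'x) \<Rightarrow> real" where
  "eta h m x = (h (\<lambda>j\<in>{..<m}. x j) - h (\<lambda>j\<in>{..<m}. x (m + j)))\<^sup>2 / 2"

definition eta_tilde :: "((nat \<Rightarrow> 'x) \<Rightarrow> real) \<Rightarrow> nat \<Rightarrow> (nat \<Rightarrow> 'x) \<Rightarrow> real" where
  "eta_tilde h m x = (\<Sum>p\<in>{p. p permutes {..<2*m}}. eta h m (x \<circ> p)) / fact (2*m)"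

definition sym_kernel :: "'x measure \<Rightarrow> nat \<Rightarrow> ((nat \<Rightarrow> 'x) \<Rightarrow> real) \<Rightarrow> bool" where
  "sym_kernel S r g = (\<forall>x\<in>space (PiM {..<r} (\<lambda>_. S)). \<forall>p. p permutes {..<r} \<longrightarrow>
      g (\<lambda>j\<in>{..<r}. x (p j)) = g x)"

definition ustat :: "((nat \<Rightarrow> 'x) \<Rightarrow> real) \<Rightarrow> nat \<Rightarrow> nat \<Rightarrow> (nat \<Rightarrow> 'x) \<Rightarrow> real" where
  "ustat g r n Y = (\<Sum>K\<in>{K. K \<subseteq> {..<n} \<and> card K = r}.
      g (\<lambda>j\<in>{..<r}. Y (sorted_list_of_set K ! j))) / real (n choose r)"

definition boundH :: "nat \<Rightarrow> nat \<Rightarrow> real \<Rightarrow> real \<Rightarrow> real" where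
  "boundH k k' L w = sqrt (2 * w / real k * L) + sqrt (1 / real k * sqrt (1 / (2 * real k')) * L powr (3/2))
      + 4 / (3 * real k) * L"

definition boundB :: "nat \<Rightarrow> nat \<Rightarrow> real \<Rightarrow> real \<Rightarrow> real" where
  "boundB k k' L w = sqrt (2 * w / real k * L) + (sqrt 2 / 2 + sqrt 42 / 6) * sqrt (2 / (real k * real k')) * L
      + 4 / (3 * real k) * L"

end

theory Submission
  imports Defs
begin

text \<open>
  Hoeffding's representation writes \<open>U\<close> as the average, over all orderings of the sample,
  of the mean of the kernel over \<open>k = n div m\<close> disjoint blocks. By Jensen's inequality the
  moment generating function of \<open>U\<close> is therefore dominated by that of a mean of \<open>k\<close>
  independent copies of the kernel, so Bernstein's and Hoeffding's inequalities hold for a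
  U-statistic with effective sample size \<open>k\<close>.

  Bernstein's inequality bounds \<open>U - \<theta>\<close> in terms of the variance \<open>\<sigma>\<^sup>2\<close> of the kernel. The
  symmetrised kernel \<open>eta_tilde h m\<close> has values in \<open>[0, 1/2]\<close> and mean \<open>\<sigma>\<^sup>2\<close>, so the same
  argument applied to its U-statistic \<open>Wt\<close> (order \<open>2 m\<close>, effective sample size \<open>k'\<close>) bounds
  \<open>\<sigma>\<^sup>2 - Wt\<close> by Hoeffding (giving (H)) or by Bernstein with variance at most \<open>\<sigma>\<^sup>2/2\<close>
  (giving (B)). Each of the two exceptional events has probability \<open>\<delta>/2\<close>, and substituting
  the bound on \<open>\<sigma>\<^sup>2\<close> is elementary algebra. Replacing \<open>h\<close> by \<open>1 - h\<close> leaves \<open>eta\<close>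
  unchanged and gives the bounds on \<open>\<theta> - U\<close>; finally \<open>W = Wt\<close> when \<open>eta h m\<close> is symmetric.
\<close>

section \<open>Elementary exponential bounds\<close>

lemma exp_le_quadratic_nonpos:
  fixes x :: real assumes "x \<le> 0" shows "exp x \<le> 1 + x + x^2/2"
proof -
  let ?f = "\<lambda>t::real. 1 + t + t^2/2 - exp t"
  have "?f x \<ge> ?f 0"
  proof (rule DERIV_nonpos_imp_nonincreasing[OF assms])
    fix t :: real assume "x \<le> t" "t \<le> 0"
    show "\<exists>y. DERIV ?f t :> y \<and> y \<le> 0"
      by (rule exI[of _ "1 + t - exp t"]) (auto intro!: derivative_eq_intros simp: exp_ge_add_one_self)
  qed
  then show ?thesis by simp
qed

lemma exp_le_bernstein_nonneg:
  fixes x :: real assumes "0 \<le> x" "x < 3" shows "exp x \<le> 1 + x + x^2/(2*(1-x/3))"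
proof -
  let ?f = "\<lambda>t::real. (1 + t + 3*t^2/(2*(3-t))) * exp (-t)"
  txt \<open>\<open>?f\<close> is nondecreasing on \<open>[0, 3)\<close>: its derivative is \<open>t\<^sup>3 exp (-t) / (2 (3 - t)\<^sup>2)\<close>.\<close>
  have "?f 0 \<le> ?f x"
  proof (rule DERIV_nonneg_imp_nondecreasing[OF assms(1)])
    fix t :: real assume t: "0 \<le> t" "t \<le> x"
    then have t3: "t < 3" using assms by simp
    have "DERIV ?f t :> (1 + (3*(2*t)*(2*(3-t)) + 3*t^2*2)/(2*(3-t))^2) * exp (-t) - (1 + t + 3*t^2/(2*(3-t))) * exp (-t)"
      using t3 by (auto intro!: derivative_eq_intros simp: power2_eq_square)
    moreover have "(1 + (3*(2*t)*(2*(3-t)) + 3*t^2*2)/(2*(3-t))^2) * exp (-t) - (1 + t + 3*t^2/(2*(3-t))) * exp (-t)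
       = t^3/(2*(3-t)^2) * exp (-t)"
    proof -
      have ne: "3 - t \<noteq> 0" using t3 by simp
      have "(1 + (3*(2*t)*(2*(3-t)) + 3*t^2*2)/(2*(3-t))^2) - (1 + t + 3*t^2/(2*(3-t))) = t^3/(2*(3-t)^2)"
        using ne by (simp add: divide_simps) (simp add: algebra_simps power2_eq_square power3_eq_cube)
      then show ?thesis by (simp add: left_diff_distrib[symmetric])
    qed
    moreover have "t^3/(2*(3-t)^2) * exp (-t) \<ge> 0" using t by simp
    ultimately show "\<exists>y. DERIV ?f t :> y \<and> 0 \<le> y" by auto
  qed
  then have "1 \<le> (1 + x + 3*x^2/(2*(3-x))) * exp (-x)" by simp
  then have "exp x \<le> 1 + x + 3*x^2/(2*(3-x))"
    by (simp add: exp_minus field_simps)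
  also have "3*x^2/(2*(3-x)) = x^2/(2*(1-x/3))" using assms by (simp add: field_simps)
  finally show ?thesis .
qed

lemma exp_le_bernstein:
  fixes x c :: real assumes "x \<le> c" "0 \<le> c" "c < 3"
  shows "exp x \<le> 1 + x + x^2/(2*(1-c/3))"
proof (cases "x \<le> 0")
  case True
  have "exp x \<le> 1 + x + x^2/2" by (rule exp_le_quadratic_nonpos[OF True])
  also have "x^2/2 \<le> x^2/(2*(1-c/3))"
    using assms by (intro divide_left_mono) (auto simp: field_simps)
  finally show ?thesis by simp
next
  case False
  have "exp x \<le> 1 + x + x^2/(2*(1-x/3))" using False assms by (intro exp_le_bernstein_nonneg) auto
  also have "x^2/(2*(1-x/3)) \<le> x^2/(2*(1-c/3))"
    using assms False mult_pos_pos[of "3-c" "3-x"] by (intro divide_left_mono) (auto simp: field_simps)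
  finally show ?thesis by simp
qed

lemma ustat_sample_in_space:
  fixes Y :: "nat \<Rightarrow> 'b" and n :: nat
  assumes Y: "\<And>i. i < n \<Longrightarrow> Y i \<in> space S" and K: "K \<subseteq> {..<n}" "card K = r"
  shows "(\<lambda>j\<in>{..<r}. Y (sorted_list_of_set K ! j)) \<in> space (PiM {..<r} (\<lambda>_. S))"
proof -
  have fin: "finite K" using K(1) by (rule finite_subset) simp
  have "sorted_list_of_set K ! j < n" if "j < r" for j
  proof -
    have "sorted_list_of_set K ! j \<in> set (sorted_list_of_set K)"
      using that K fin by (intro nth_mem) simp
    then show ?thesis using K fin by auto
  qed
  then show ?thesis using Y by (auto simp: space_PiM PiE_def Pi_def)
qed

lemma ustat_cong:
  assumes g: "\<And>x. x \<in> space (PiM {..<r} (\<lambda>_. S)) \<Longrightarrow> g x = g' x"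
    and Y: "\<And>i. i < n \<Longrightarrow> Y i \<in> space S"
  shows "ustat g r n Y = ustat g' r n Y"
  unfolding ustat_def
proof (intro arg_cong2[where f="(/)"] sum.cong refl)
  fix K assume "K \<in> {K. K \<subseteq> {..<n} \<and> card K = r}"
  then show "g (\<lambda>j\<in>{..<r}. Y (sorted_list_of_set K ! j)) = g' (\<lambda>j\<in>{..<r}. Y (sorted_list_of_set K ! j))"
    using g ustat_sample_in_space[where Y=Y and K=K, OF Y] by auto
qed

lemma ustat_nonneg:
  assumes g: "\<And>x. x \<in> space (PiM {..<r} (\<lambda>_. S)) \<Longrightarrow> 0 \<le> g x"
    and Y: "\<And>i. i < n \<Longrightarrow> Y i \<in> space S"
  shows "0 \<le> ustat g r n Y"
  unfolding ustat_def
proof (intro divide_nonneg_nonneg sum_nonneg)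
  fix K assume "K \<in> {K. K \<subseteq> {..<n} \<and> card K = r}"
  then show "0 \<le> g (\<lambda>j\<in>{..<r}. Y (sorted_list_of_set K ! j))"
    using g ustat_sample_in_space[where Y=Y and K=K, OF Y] by auto
qed simp

lemma ustat_affine:
  assumes "r \<le> n"
  shows "ustat (\<lambda>x. a + b * g x) r n Y = a + b * ustat g r n Y"
proof -
  have "card {K. K \<subseteq> {..<n} \<and> card K = r} = n choose r"
    using n_subsets[of "{..<n}" r] by simp
  moreover have "real (n choose r) > 0" using assms by simp
  ultimately show ?thesis
    unfolding ustat_def by (simp add: sum.distrib sum_distrib_left[symmetric] add_divide_distrib)
qed

section \<open>Hoeffding's representation of a U-statistic\<close>

lemma sym_kernel_eq_if_same_set:
  fixes g :: "(nat \<Rightarrow> 'x) \<Rightarrow> real"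
  assumes sym: "sym_kernel S r g" and dt: "distinct t" and ds: "distinct s"
    and st: "set t = set s" and len: "length s = r"
    and Y: "\<And>i. i \<in> set s \<Longrightarrow> Y i \<in> space S"
  shows "g (\<lambda>j\<in>{..<r}. Y (t ! j)) = g (\<lambda>j\<in>{..<r}. Y (s ! j))"
proof -
  have "mset t = mset s" using set_eq_iff_mset_eq_distinct[OF dt ds] st by simp
  then obtain p where p: "p permutes {..<length s}" "permute_list p s = t"
    by (rule mset_eq_permutation)
  define x where "x = (\<lambda>j\<in>{..<r}. Y (s ! j))"
  have x: "x \<in> space (PiM {..<r} (\<lambda>_. S))"
    unfolding x_def space_PiM using Y len by (auto simp: PiE_def)
  have "g (\<lambda>j\<in>{..<r}. x (p j)) = g x"
    using sym x p(1) len unfolding sym_kernel_def by auto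
  moreover have "(\<lambda>j\<in>{..<r}. x (p j)) = (\<lambda>j\<in>{..<r}. Y (t ! j))"
  proof (rule restrict_ext)
    fix j assume j: "j \<in> {..<r}"
    have "t ! j = s ! p j" using permute_list_nth[OF p(1)] p(2) j len by auto
    moreover have "p j < r" using permutes_in_image[OF p(1)] j len by auto
    ultimately show "x (p j) = Y (t ! j)" by (simp add: x_def)
  qed
  ultimately show ?thesis by (simp add: x_def)
qed

lemma card_permutations_of_set_take:
  assumes K: "K \<subseteq> {..<n}" "card K = r"
  shows "card {l \<in> permutations_of_set {..<n}. set (take r l) = K} = fact r * fact (n - r)"
proof -
  have fK: "finite K" using K(1) finite_subset by blast
  have "bij_betw (\<lambda>(a,b). a @ b) (permutations_of_set K \<times> permutations_of_set ({..<n} - K))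
          {l \<in> permutations_of_set {..<n}. set (take r l) = K}"
  proof (rule bij_betw_byWitness[where f' = "\<lambda>l. (take r l, drop r l)"])
    show "\<forall>a\<in>permutations_of_set K \<times> permutations_of_set ({..<n} - K).
           (take r (case a of (a, b) \<Rightarrow> a @ b), drop r (case a of (a, b) \<Rightarrow> a @ b)) = a"
      using K by (auto dest: length_finite_permutations_of_set)
    show "\<forall>a'\<in>{l \<in> permutations_of_set {..<n}. set (take r l) = K}.
            (case (take r a', drop r a') of (a, b) \<Rightarrow> a @ b) = a'" by simp
    show "(\<lambda>(a, b). a @ b) ` (permutations_of_set K \<times> permutations_of_set ({..<n} - K))
          \<subseteq> {l \<in> permutations_of_set {..<n}. set (take r l) = K}"
    proof clarify
      fix a b assume ab: "a \<in> permutations_of_set K" "b \<in> permutations_of_set ({..<n} - K)"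
      have "length a = r" using length_finite_permutations_of_set[OF ab(1)] K by simp
      then show "a @ b \<in> permutations_of_set {..<n} \<and> set (take r (a @ b)) = K"
        using ab K by (auto simp: permutations_of_set_def)
    qed
    show "(\<lambda>l. (take r l, drop r l)) ` {l \<in> permutations_of_set {..<n}. set (take r l) = K}
          \<subseteq> permutations_of_set K \<times> permutations_of_set ({..<n} - K)"
    proof
      fix pr assume "pr \<in> (\<lambda>l. (take r l, drop r l)) ` {l \<in> permutations_of_set {..<n}. set (take r l) = K}"
      then obtain l where l: "l \<in> permutations_of_set {..<n}" "K = set (take r l)" and pr: "pr = (take r l, drop r l)"
        by auto
      have d: "distinct l" and sl: "set l = {..<n}" using l(1) by (auto simp: permutations_of_set_def)
      have u: "set l = set (take r l) \<union> set (drop r l)" by (metis append_take_drop_id set_append)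
      have "distinct (take r l @ drop r l)" using d by simp
      then have dj: "set (take r l) \<inter> set (drop r l) = {}" by (simp only: distinct_append)
      have "set (drop r l) = set l - set (take r l)" using u dj by blast
      then show "pr \<in> permutations_of_set K \<times> permutations_of_set ({..<n} - K)"
        using d sl l(2) pr by (auto simp: permutations_of_set_def)
    qed
  qed
  then have "card {l \<in> permutations_of_set {..<n}. set (take r l) = K}
      = card (permutations_of_set K \<times> permutations_of_set ({..<n} - K))"
    by (simp add: bij_betw_same_card)
  also have "\<dots> = fact r * fact (n - r)"
    using K fK by (simp add: card_cartesian_product card_Diff_subset)
  finally show ?thesis .
qed

lemma sum_permutations_of_set_sym_kernel:
  fixes g :: "(nat \<Rightarrow> 'x) \<Rightarrow> real"
  assumes sym: "sym_kernel S r g" and r: "r \<le> n"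
    and Y: "\<And>i. i < n \<Longrightarrow> Y i \<in> space S"
  shows "(\<Sum>l\<in>permutations_of_set {..<n}. g (\<lambda>j\<in>{..<r}. Y (l ! j)))
       = fact r * fact (n - r) * (\<Sum>K\<in>{K. K \<subseteq> {..<n} \<and> card K = r}. g (\<lambda>j\<in>{..<r}. Y (sorted_list_of_set K ! j)))"
proof -
  let ?P = "permutations_of_set {..<n}"
  let ?Ks = "{K. K \<subseteq> {..<n} \<and> card K = r}"
  have fKs: "finite ?Ks" by (rule finite_subset[of _ "Pow {..<n}"]) auto
  have perm: "distinct l" "set l = {..<n}" "length l = n" if "l \<in> ?P" for l
    using permutations_of_setD[OF that] length_finite_permutations_of_set[OF that] by auto
  have img: "(\<lambda>l. set (take r l)) ` ?P \<subseteq> ?Ks"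
  proof clarify
    fix l assume "l \<in> ?P"
    then show "set (take r l) \<subseteq> {..<n} \<and> card (set (take r l)) = r"
      using perm r set_take_subset[of r l] by (auto simp: distinct_card)
  qed
  have "(\<Sum>l\<in>?P. g (\<lambda>j\<in>{..<r}. Y (l ! j)))
      = (\<Sum>K\<in>?Ks. \<Sum>l\<in>{l \<in> ?P. set (take r l) = K}. g (\<lambda>j\<in>{..<r}. Y (l ! j)))"
    by (rule sum.group[OF finite_permutations_of_set fKs img, symmetric])
  also have "\<dots> = (\<Sum>K\<in>?Ks. \<Sum>l\<in>{l \<in> ?P. set (take r l) = K}. g (\<lambda>j\<in>{..<r}. Y (sorted_list_of_set K ! j)))"
  proof (intro sum.cong refl)
    fix K l assume K: "K \<in> ?Ks" and l: "l \<in> {l \<in> ?P. set (take r l) = K}"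
    have "(\<lambda>j\<in>{..<r}. Y (l ! j)) = (\<lambda>j\<in>{..<r}. Y (take r l ! j))"
      by (rule restrict_ext) simp
    moreover have "g (\<lambda>j\<in>{..<r}. Y (take r l ! j)) = g (\<lambda>j\<in>{..<r}. Y (sorted_list_of_set K ! j))"
      apply (rule sym_kernel_eq_if_same_set[OF sym])
      using K l Y perm finite_subset[of K "{..<n}"] by (auto simp: distinct_take)
    ultimately show "g (\<lambda>j\<in>{..<r}. Y (l ! j)) = g (\<lambda>j\<in>{..<r}. Y (sorted_list_of_set K ! j))" by simp
  qed
  also have "\<dots> = fact r * fact (n - r) * (\<Sum>K\<in>?Ks. g (\<lambda>j\<in>{..<r}. Y (sorted_list_of_set K ! j)))"
    by (simp add: card_permutations_of_set_take sum_distrib_left)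
  finally show ?thesis .
qed

lemma sum_permutations_of_set_rotate:
  assumes "q \<le> n"
  shows "(\<Sum>l\<in>permutations_of_set {..<n}. F (rotate q l)) = (\<Sum>l\<in>permutations_of_set {..<n}. F l)"
proof -
  let ?P = "permutations_of_set {..<n}"
  have len: "length l = n" if "l \<in> ?P" for l
    using length_finite_permutations_of_set[OF that] by simp
  have rot: "rotate a (rotate b l) = l" if "l \<in> ?P" "a + b = n" for a b l
  proof -
    have "rotate a (rotate b l) = rotate n l" using that(2) by (simp add: rotate_rotate)
    also have "\<dots> = l" using len[OF that(1)] by simp
    finally show ?thesis .
  qed
  have img: "rotate a ` ?P \<subseteq> ?P" for a
  proof
    fix y assume "y \<in> rotate a ` ?P"
    then obtain x where x: "x \<in> ?P" "y = rotate a x" by blast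
    then show "y \<in> ?P" unfolding permutations_of_set_def by (simp only: mem_Collect_eq set_rotate distinct_rotate)
  qed
  have "bij_betw (rotate q) ?P ?P"
    apply (rule bij_betw_byWitness[where f' = "rotate (n - q)", OF _ _ img img])
    using rot assms by auto
  then show ?thesis by (rule sum.reindex_bij_betw)
qed

lemma sum_permutations_of_set_shift:
  assumes "q + r \<le> n"
  shows "(\<Sum>l\<in>permutations_of_set {..<n}. G (\<lambda>j\<in>{..<r}. Y (l ! (q + j))))
       = (\<Sum>l\<in>permutations_of_set {..<n}. G (\<lambda>j\<in>{..<r}. Y (l ! j)))"
proof -
  have len: "length l = n" if "l \<in> permutations_of_set {..<n}" for l
    using length_finite_permutations_of_set[OF that] by simp
  have "(\<Sum>l\<in>permutations_of_set {..<n}. G (\<lambda>j\<in>{..<r}. Y (l ! (q + j))))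
      = (\<Sum>l\<in>permutations_of_set {..<n}. G (\<lambda>j\<in>{..<r}. Y (rotate q l ! j)))"
  proof (intro sum.cong refl arg_cong[where f=G] restrict_ext)
    fix l j assume "l \<in> permutations_of_set {..<n}" "j \<in> {..<r}"
    then show "Y (l ! (q + j)) = Y (rotate q l ! j)"
      using assms len by (simp add: nth_rotate)
  qed
  also have "\<dots> = (\<Sum>l\<in>permutations_of_set {..<n}. G (\<lambda>j\<in>{..<r}. Y (l ! j)))"
    using assms by (intro sum_permutations_of_set_rotate) auto
  finally show ?thesis .
qed

lemma block_index_less:
  fixes i j r n :: nat
  assumes "i < n div r" "j < r"
  shows "i * r + j < n"
proof -
  have "i * r + j < (i + 1) * r" using assms by simp
  also have "\<dots> \<le> n div r * r" using assms by (intro mult_right_mono) auto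
  also have "\<dots> \<le> n" by simp
  finally show ?thesis .
qed

lemma permutation_block_index_less:
  assumes "l \<in> permutations_of_set {..<n}" "i < n div r" "j < r"
  shows "l ! (i * r + j) < n"
proof -
  have "i * r + j < length l"
    using block_index_less[OF assms(2,3)] length_finite_permutations_of_set[OF assms(1)] by simp
  then show ?thesis using permutations_of_setD(1)[OF assms(1)] nth_mem by fastforce
qed

lemma permutation_block_index_inj:
  assumes l: "l \<in> permutations_of_set {..<n}"
    and "i < n div r" "i' < n div r" "j < r" "j' < r" "l ! (i * r + j) = l ! (i' * r + j')"
  shows "i = i' \<and> j = j'"
proof -
  have "i * r + j = i' * r + j'"
    using assms block_index_less[of i n r j] block_index_less[of i' n r j']
      nth_eq_iff_index_eq[OF permutations_of_setD(2)[OF l]] length_finite_permutations_of_set[OF l]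
    by simp
  then have "(i * r + j) div r = (i' * r + j') div r" "(i * r + j) mod r = (i' * r + j') mod r" by simp_all
  then show ?thesis using assms by simp
qed

lemma ustat_eq_average_block_means:
  fixes g :: "(nat \<Rightarrow> 'x) \<Rightarrow> real"
  assumes sym: "sym_kernel S r g" and r: "1 \<le> r" "r \<le> n"
    and Y: "\<And>i. i < n \<Longrightarrow> Y i \<in> space S"
  shows "ustat g r n Y = (\<Sum>l\<in>permutations_of_set {..<n}.
            (\<Sum>i<n div r. g (\<lambda>j\<in>{..<r}. Y (l ! (i * r + j)))) / real (n div r)) / fact n"
proof -
  let ?P = "permutations_of_set {..<n}"
  let ?Ks = "{K. K \<subseteq> {..<n} \<and> card K = r}"
  let ?k = "n div r"
  let ?A = "\<Sum>l\<in>?P. g (\<lambda>j\<in>{..<r}. Y (l ! j))"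
  have kpos: "?k > 0" using r by (auto simp: div_greater_zero_iff)
  have "(\<Sum>l\<in>?P. (\<Sum>i<?k. g (\<lambda>j\<in>{..<r}. Y (l ! (i * r + j)))) / real ?k)
      = (\<Sum>i<?k. \<Sum>l\<in>?P. g (\<lambda>j\<in>{..<r}. Y (l ! (i * r + j)))) / real ?k"
    by (simp add: sum_divide_distrib[symmetric] sum.swap[of _ ?P])
  also have "\<dots> = (\<Sum>i<?k. ?A) / real ?k"
  proof (rule arg_cong[where f="\<lambda>x. x / real ?k"], rule sum.cong[OF refl])
    fix i assume "i \<in> {..<?k}"
    then have "i * r + r \<le> n"
      using block_index_less[of i n r "r - 1"] r by simp
    then show "(\<Sum>l\<in>?P. g (\<lambda>j\<in>{..<r}. Y (l ! (i * r + j)))) = ?A"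
      using sum_permutations_of_set_shift[where G=g and Y=Y and q="i * r" and r=r and n=n] by simp
  qed
  also have "\<dots> = fact r * fact (n - r) * (\<Sum>K\<in>?Ks. g (\<lambda>j\<in>{..<r}. Y (sorted_list_of_set K ! j)))"
    using kpos sum_permutations_of_set_sym_kernel[OF sym r(2) Y] by simp
  finally have eq: "(\<Sum>l\<in>?P. (\<Sum>i<?k. g (\<lambda>j\<in>{..<r}. Y (l ! (i * r + j)))) / real ?k)
      = fact r * fact (n - r) * (\<Sum>K\<in>?Ks. g (\<lambda>j\<in>{..<r}. Y (sorted_list_of_set K ! j)))" .
  have "(fact n :: real) = fact r * fact (n - r) * real (n choose r)"
    using binomial_fact_lemma[OF r(2)] by (metis of_nat_fact of_nat_mult)
  then show ?thesis unfolding ustat_def eq by simp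
qed

lemma eta_comp:
  "eta h m (x \<circ> p) = (h (\<lambda>j\<in>{..<m}. x (p j)) - h (\<lambda>j\<in>{..<m}. x (p (m + j))))^2 / 2"
  by (simp add: eta_def comp_def)

lemma eta_cong:
  assumes "\<And>j. j < 2 * m \<Longrightarrow> x j = y j"
  shows "eta h m x = eta h m y"
proof -
  have "(\<lambda>j\<in>{..<m}. x j) = (\<lambda>j\<in>{..<m}. y j)" "(\<lambda>j\<in>{..<m}. x (m + j)) = (\<lambda>j\<in>{..<m}. y (m + j))"
    using assms by (auto intro!: restrict_ext)
  then show ?thesis by (simp add: eta_def)
qed

lemma restrict_reindex_in_space:
  assumes x: "x \<in> space (PiM {..<r'} (\<lambda>_. S))" and f: "\<And>j. j < r \<Longrightarrow> f j < r'"
  shows "(\<lambda>j\<in>{..<r}. x (f j)) \<in> space (PiM {..<r} (\<lambda>_. S))"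
  using x f by (auto simp: space_PiM PiE_def Pi_def)

lemma measurable_restrict_reindex:
  assumes f: "\<And>j. j < r \<Longrightarrow> f j < r'"
  shows "(\<lambda>x. \<lambda>j\<in>{..<r}. x (f j)) \<in> PiM {..<r'} (\<lambda>_. S) \<rightarrow>\<^sub>M PiM {..<r} (\<lambda>_. S)"
  by (rule measurable_restrict) (use f in \<open>auto intro!: measurable_component_singleton\<close>)

lemma eta_comp_measurable:
  assumes h: "h \<in> borel_measurable (PiM {..<m} (\<lambda>_. S))" and p: "p permutes {..<2*m}"
  shows "(\<lambda>x. eta h m (x \<circ> p)) \<in> borel_measurable (PiM {..<2*m} (\<lambda>_. S))"
proof -
  have p1: "p j < 2 * m" if "j < m" for j using permutes_in_image[OF p] that by auto
  have p2: "p (m + j) < 2 * m" if "j < m" for j using permutes_in_image[OF p] that by auto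
  have [measurable]: "(\<lambda>x. h (\<lambda>j\<in>{..<m}. x (p j))) \<in> borel_measurable (PiM {..<2*m} (\<lambda>_. S))"
    by (rule measurable_compose[OF measurable_restrict_reindex h]) (rule p1)
  have [measurable]: "(\<lambda>x. h (\<lambda>j\<in>{..<m}. x (p (m + j)))) \<in> borel_measurable (PiM {..<2*m} (\<lambda>_. S))"
    by (rule measurable_compose[OF measurable_restrict_reindex h]) (rule p2)
  show ?thesis unfolding eta_comp by measurable
qed

lemma eta_tilde_measurable:
  assumes h: "h \<in> borel_measurable (PiM {..<m} (\<lambda>_. S))"
  shows "eta_tilde h m \<in> borel_measurable (PiM {..<2*m} (\<lambda>_. S))"
proof -
  have "(\<lambda>x. (\<Sum>p\<in>{p. p permutes {..<2*m}}. eta h m (x \<circ> p)) / fact (2*m)) \<in> borel_measurable (PiM {..<2*m} (\<lambda>_. S))"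
    by (rule borel_measurable_divide[OF borel_measurable_sum]) (use eta_comp_measurable[OF h] in auto)
  then show ?thesis unfolding eta_tilde_def[abs_def] .
qed

lemma eta_comp_bounds:
  assumes hr: "\<And>x. x \<in> space (PiM {..<m} (\<lambda>_. S)) \<Longrightarrow> 0 \<le> h x \<and> h x \<le> 1"
    and x: "x \<in> space (PiM {..<2*m} (\<lambda>_. S))" and p: "p permutes {..<2*m}"
  shows "0 \<le> eta h m (x \<circ> p) \<and> eta h m (x \<circ> p) \<le> 1/2"
proof -
  have p1: "p j < 2 * m" if "j < m" for j using permutes_in_image[OF p] that by auto
  have p2: "p (m + j) < 2 * m" if "j < m" for j using permutes_in_image[OF p] that by auto
  have a: "0 \<le> h (\<lambda>j\<in>{..<m}. x (p j)) \<and> h (\<lambda>j\<in>{..<m}. x (p j)) \<le> 1"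
    using hr[OF restrict_reindex_in_space[OF x p1]] .
  have b: "0 \<le> h (\<lambda>j\<in>{..<m}. x (p (m + j))) \<and> h (\<lambda>j\<in>{..<m}. x (p (m + j))) \<le> 1"
    using hr[OF restrict_reindex_in_space[OF x p2]] .
  have "(h (\<lambda>j\<in>{..<m}. x (p j)) - h (\<lambda>j\<in>{..<m}. x (p (m + j))))^2 \<le> 1"
    using a b by (simp add: abs_square_le_1 abs_le_iff)
  then show ?thesis unfolding eta_comp by simp
qed

lemma eta_tilde_bounds:
  assumes hr: "\<And>x. x \<in> space (PiM {..<m} (\<lambda>_. S)) \<Longrightarrow> 0 \<le> h x \<and> h x \<le> 1"
    and x: "x \<in> space (PiM {..<2*m} (\<lambda>_. S))"
  shows "0 \<le> eta_tilde h m x \<and> eta_tilde h m x \<le> 1/2"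
proof -
  let ?Pm = "{p. p permutes {..<2*m}}"
  have card: "card ?Pm = fact (2*m)" by (rule card_permutations) auto
  have "(\<Sum>p\<in>?Pm. eta h m (x \<circ> p)) \<le> of_nat (card ?Pm) * (1/2)"
    by (rule sum_bounded_above) (use eta_comp_bounds[OF hr x] in auto)
  moreover have "(\<Sum>p\<in>?Pm. eta h m (x \<circ> p)) \<ge> 0"
    by (rule sum_nonneg) (use eta_comp_bounds[OF hr x] in auto)
  ultimately show ?thesis using card unfolding eta_tilde_def by (auto simp: field_simps)
qed

lemma sym_kernel_eta_tilde: "sym_kernel S (2*m) (eta_tilde h m)"
  unfolding sym_kernel_def
proof (intro ballI allI impI)
  fix x q assume x: "x \<in> space (PiM {..<2*m} (\<lambda>_. S))" and q: "q permutes {..<2*m}"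
  let ?Pm = "{p. p permutes {..<2*m}}"
  have "(\<Sum>p\<in>?Pm. eta h m ((\<lambda>j\<in>{..<2*m}. x (q j)) \<circ> p)) = (\<Sum>p\<in>?Pm. eta h m (x \<circ> (q \<circ> p)))"
    by (intro sum.cong refl eta_cong) (auto dest: permutes_in_image)
  also have "\<dots> = (\<Sum>p\<in>?Pm. eta h m (x \<circ> p))"
    by (rule setum_permutations_compose_left[OF q, symmetric])
  finally show "eta_tilde h m (\<lambda>j\<in>{..<2*m}. x (q j)) = eta_tilde h m x"
    unfolding eta_tilde_def by simp
qed

lemma eta_tilde_eq_eta:
  assumes sym: "sym_kernel S (2*m) (eta h m)" and x: "x \<in> space (PiM {..<2*m} (\<lambda>_. S))"
  shows "eta_tilde h m x = eta h m x"
proof -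
  let ?Pm = "{p. p permutes {..<2*m}}"
  have card: "card ?Pm = fact (2*m)" by (rule card_permutations) auto
  have "(\<Sum>p\<in>?Pm. eta h m (x \<circ> p)) = (\<Sum>p\<in>?Pm. eta h m x)"
  proof (rule sum.cong[OF refl])
    fix p assume "p \<in> ?Pm"
    then have "eta h m (x \<circ> p) = eta h m (\<lambda>j\<in>{..<2*m}. x (p j))"
      by (intro eta_cong) simp
    also have "\<dots> = eta h m x" using sym x \<open>p \<in> ?Pm\<close> unfolding sym_kernel_def by blast
    finally show "eta h m (x \<circ> p) = eta h m x" .
  qed
  then show ?thesis unfolding eta_tilde_def using card by simp
qed

lemma eta_one_minus: "eta (\<lambda>x. 1 - h x) m = eta h m"
  by (rule ext) (simp add: eta_def power2_eq_square algebra_simps)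

lemma eta_tilde_one_minus: "eta_tilde (\<lambda>x. 1 - h x) m = eta_tilde h m"
  by (simp add: eta_tilde_def[abs_def] eta_one_minus)

section \<open>Deterministic comparison with the bounds\<close>

text \<open>The witness is \<open>s = \<epsilon> / (V + b \<epsilon> / 3)\<close>, the usual choice in Bernstein's inequality.\<close>

lemma bernstein_exponent_le:
  fixes k :: nat and b V L :: real
  assumes k: "k > 0" and b: "b > 0" and V: "V > 0" and L: "L > 0"
  defines "\<epsilon> \<equiv> sqrt (2 * V * L / real k) + 2 * b * L / (3 * real k)"
  obtains s where "0 < s" and "s * b < 3"
    and "- (real k * s) * \<epsilon> + real k * (s^2 * V / (2 * (1 - s * b / 3))) \<le> - L"
proof -
  define a where "a = sqrt (2 * V * L / real k)"
  define c where "c = 2 * b * L / (3 * real k)"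
  define W where "W = V + b * \<epsilon> / 3"
  have a0: "a \<ge> 0" and a2: "a^2 = 2 * V * L / k" using V L by (simp_all add: a_def)
  have c0: "c > 0" and kc: "real k * c = 2 * b * L / 3" using b L k by (simp_all add: c_def)
  have e1': "\<epsilon> = a + c" by (simp add: \<epsilon>_def a_def c_def)
  have e: "\<epsilon> = a + c" "\<epsilon> > 0" using a0 c0 e1' by simp_all
  have W: "W > 0" using V mult_pos_pos[OF b e(2)] by (simp add: W_def)
  define s where "s = \<epsilon> / W"
  have s0: "0 < s" using e W by (simp add: s_def)
  have D: "1 - s * b / 3 = V / W" using W by (simp add: s_def W_def field_simps)
  moreover have "V / W > 0" using V W by simp
  ultimately have sb: "s * b < 3" by linarith
  have e1: "s^2 * V / (2 * (1 - s * b / 3)) = \<epsilon>^2 / (2 * W)"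
    unfolding D using V W by (simp add: s_def field_simps power2_eq_square)
  have e2: "- (real k * s) * \<epsilon> = - real k * \<epsilon>^2 / W" by (simp add: s_def power2_eq_square)
  have main: "real k * \<epsilon>^2 \<ge> 2 * L * W"
  proof -
    have "real k * \<epsilon>^2 = real k * a^2 + 2 * (real k * c) * a + (real k * c) * c"
      by (simp add: e(1) power2_eq_square algebra_simps)
    also have "real k * a^2 = 2 * V * L" using k by (simp add: a2)
    finally have "real k * \<epsilon>^2 = 2 * V * L + 2 * (real k * c) * a + (real k * c) * c" .
    moreover have "2 * L * W = 2 * V * L + (2 * b * L / 3) * (a + c)"
      by (simp add: W_def e(1) algebra_simps)
    then have "2 * L * W = 2 * V * L + (real k * c) * (a + c)" by (simp only: kc)
    moreover have "(real k * c) * a \<ge> 0" using c0 a0 k by simp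
    ultimately show ?thesis by (simp add: algebra_simps)
  qed
  have "- (real k * s) * \<epsilon> + real k * (s^2 * V / (2 * (1 - s * b / 3))) = - real k * \<epsilon>^2 / (2 * W)"
    unfolding e1 e2 using W by (simp add: field_simps)
  also have "\<dots> \<le> - L" using main W by (simp add: field_simps)
  finally show ?thesis using that s0 sb by blast
qed

lemma le_add_three_halves_of_sq_le:
  fixes x y a :: real
  assumes x: "x \<ge> 0" and y: "y \<ge> 0" and a: "a \<ge> 0" and h: "x^2 \<le> y^2 + a * x + a^2 / 3"
  shows "x \<le> y + 3 / 2 * a"
proof (rule ccontr)
  assume "\<not> x \<le> y + 3 / 2 * a"
  then have gt: "x > y + 3 / 2 * a" by simp
  define z where "z = y + 3 / 2 * a"
  have "x^2 - a * x - (z^2 - a * z) = (x - z) * (x + z - a)" by (simp add: power2_eq_square algebra_simps)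
  moreover have "(x - z) * (x + z - a) > 0" using gt y a by (intro mult_pos_pos) (auto simp: z_def)
  ultimately have "x^2 - a * x > z^2 - a * z" by simp
  moreover have "z^2 - a * z = y^2 + 2 * a * y + 3 / 4 * a^2" by (simp add: z_def power2_eq_square algebra_simps)
  moreover have "2 * a * y + 3 / 4 * a^2 \<ge> a^2 / 3"
    using mult_nonneg_nonneg[OF a y] mult_nonneg_nonneg[OF a a] unfolding power2_eq_square by linarith
  ultimately show False using h by simp
qed

lemma bernstein_threshold_le_boundH:
  fixes k k' :: nat and L v w :: real
  assumes k: "k > 0" "k' > 0" and L: "L > 0" and v: "v \<ge> 0" and w: "w \<ge> 0"
    and h: "v - w < sqrt (L / (8 * real k'))"
  shows "sqrt (2 * v * L / real k) + 2 * L / (3 * real k) \<le> boundH k k' L w"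
proof -
  define q where "q = sqrt (L / (8 * real k'))"
  have q0: "q \<ge> 0" using L k by (simp add: q_def)
  have vw: "v \<le> w + q" using h by (simp add: q_def)
  have "sqrt (2 * v * L / real k) \<le> sqrt (2 * (w + q) * L / real k)"
    using vw L k by (intro real_sqrt_le_mono divide_right_mono mult_right_mono) auto
  also have "\<dots> = sqrt (2 * w / real k * L + 2 * q * L / real k)" by (simp add: algebra_simps add_divide_distrib)
  also have "\<dots> \<le> sqrt (2 * w / real k * L) + sqrt (2 * q * L / real k)"
    using w q0 L k by (intro sqrt_add_le_add_sqrt) auto
  also have "2 * q * L / real k = 1 / real k * sqrt (1 / (2 * real k')) * L powr (3/2)"
  proof -
    have "2 * q = sqrt 4 * sqrt (L / (8 * real k'))" by (simp add: q_def)
    also have "\<dots> = sqrt (4 * (L / (8 * real k')))" by (simp only: real_sqrt_mult)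
    also have "4 * (L / (8 * real k')) = 1 / (2 * real k') * L" by simp
    finally have "2 * q = sqrt (1 / (2 * real k')) * sqrt L" by (simp only: real_sqrt_mult)
    moreover have "L powr (3/2) = L * sqrt L"
    proof -
      have "L powr (3/2) = L powr (1 + 1/2)" by simp
      also have "\<dots> = L powr 1 * L powr (1/2)" by (rule powr_add)
      also have "\<dots> = L * sqrt L" using L by (simp add: powr_half_sqrt)
      finally show ?thesis .
    qed
    ultimately show ?thesis by (simp add: field_simps)
  qed
  finally have "sqrt (2 * v * L / real k) \<le> sqrt (2 * w / real k * L) + sqrt (1 / real k * sqrt (1 / (2 * real k')) * L powr (3/2))" .
  moreover have "2 * L / (3 * real k) \<le> 4 / (3 * real k) * L" using L k by (simp add: field_simps)
  ultimately show ?thesis unfolding boundH_def by linarith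
qed

text \<open>Solving the quadratic inequality for \<open>sqrt v\<close> gives the constant \<open>3/2\<close>, which is
  smaller than the constant \<open>sqrt 2 / 2 + sqrt 42 / 6\<close> of the bound.\<close>

lemma bernstein_threshold_le_boundB:
  fixes k k' :: nat and L v w :: real
  assumes k: "k > 0" "k' > 0" and L: "L > 0" and v: "v \<ge> 0" and w: "w \<ge> 0"
    and h: "v - w < sqrt (v * L / real k') + L / (3 * real k')"
  shows "sqrt (2 * v * L / real k) + 2 * L / (3 * real k) \<le> boundB k k' L w"
proof -
  define a where "a = sqrt (L / real k')"
  have a0: "a \<ge> 0" using L k by (simp add: a_def)
  have a2: "a^2 = L / real k'" using L k by (simp add: a_def)
  have "sqrt (v * L / real k') = sqrt v * a" by (simp add: a_def real_sqrt_mult[symmetric])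
  moreover have "L / (3 * real k') = a^2 / 3" using a2 by simp
  ultimately have "(sqrt v)^2 \<le> (sqrt w)^2 + a * sqrt v + a^2 / 3" using h v w by (simp add: algebra_simps)
  then have sv: "sqrt v \<le> sqrt w + 3 / 2 * a"
    using le_add_three_halves_of_sq_le[OF real_sqrt_ge_zero[OF v] real_sqrt_ge_zero[OF w] a0] by blast
  define c where "c = sqrt (2 * L / real k)"
  have c0: "c \<ge> 0" using L k by (simp add: c_def)
  have "sqrt (2 * v * L / real k) = sqrt v * c" by (simp add: c_def real_sqrt_mult[symmetric])
  also have "\<dots> \<le> (sqrt w + 3 / 2 * a) * c" using sv c0 by (rule mult_right_mono)
  also have "\<dots> = sqrt (2 * w / real k * L) + 3 / 2 * (a * c)"
    by (simp add: c_def algebra_simps real_sqrt_mult[symmetric])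
  also have "a * c = sqrt (2 / (real k * real k')) * L"
  proof -
    have "a * c = sqrt (2 / (real k * real k') * L^2)"
      by (simp add: a_def c_def real_sqrt_mult[symmetric] power2_eq_square field_simps)
    also have "2 / (real k * real k') * L^2 = L^2 * (2 / (real k * real k'))" by simp
    also have "sqrt \<dots> = sqrt (2 / (real k * real k')) * L" using L by (simp only: real_sqrt_mult real_sqrt_abs) simp
    finally show ?thesis .
  qed
  finally have sqrt_part: "sqrt (2 * v * L / real k) \<le> sqrt (2 * w / real k * L) + 3 / 2 * (sqrt (2 / (real k * real k')) * L)" .
  have "3 / 2 \<le> sqrt 2 / 2 + sqrt 42 / 6"
  proof -
    have "1 \<le> sqrt 2" by simp
    moreover have "6 \<le> sqrt 42" by (rule real_le_rsqrt) simp
    ultimately show ?thesis by linarith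
  qed
  then have const_part: "3 / 2 * (sqrt (2 / (real k * real k')) * L) \<le> (sqrt 2 / 2 + sqrt 42 / 6) * sqrt (2 / (real k * real k')) * L"
  proof -
    have "0 \<le> sqrt (2 / (real k * real k')) * L" using L by simp
    from mult_right_mono[OF \<open>3 / 2 \<le> sqrt 2 / 2 + sqrt 42 / 6\<close> this]
    show ?thesis by (simp only: mult.assoc)
  qed
  have linear_part: "2 * L / (3 * real k) \<le> 4 / (3 * real k) * L" using L k by (simp add: field_simps)
  show ?thesis unfolding boundB_def using sqrt_part const_part linear_part by linarith
qed

section \<open>Concentration inequalities\<close>

lemma (in finite_measure) integrable_bounded_real:
  fixes f :: "'a \<Rightarrow> real"
  assumes "f \<in> borel_measurable M" "\<And>\<omega>. \<omega> \<in> space M \<Longrightarrow> \<bar>f \<omega>\<bar> \<le> B"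
  shows "integrable M f"
  by (rule integrable_const_bound[where B=B]) (use assms in auto)

context prob_space begin

lemma integrable_exp_bounded:
  fixes f :: "'a \<Rightarrow> real"
  assumes f: "f \<in> borel_measurable M" and b: "\<And>\<omega>. \<omega> \<in> space M \<Longrightarrow> \<bar>f \<omega>\<bar> \<le> B"
  shows "integrable M (\<lambda>\<omega>. exp (c * f \<omega>))"
proof (rule integrable_const_bound[where B="exp (\<bar>c\<bar> * B)"])
  show "AE x in M. norm (exp (c * f x)) \<le> exp (\<bar>c\<bar> * B)"
  proof (rule AE_I2)
    fix x assume x: "x \<in> space M"
    have "c * f x \<le> \<bar>c\<bar> * \<bar>f x\<bar>" by (simp add: abs_mult[symmetric])
    also have "\<dots> \<le> \<bar>c\<bar> * B" using b[OF x] by (simp add: mult_left_mono)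
    finally show "norm (exp (c * f x)) \<le> exp (\<bar>c\<bar> * B)" by simp
  qed
qed (use f in simp)

lemma chernoff_prob_ge:
  fixes Z :: "'a \<Rightarrow> real"
  assumes Z: "Z \<in> borel_measurable M" and s: "s > 0"
    and int: "integrable M (\<lambda>\<omega>. exp (s * Z \<omega>))"
  shows "prob {\<omega>\<in>space M. Z \<omega> \<ge> a} \<le> exp (- s * a) * expectation (\<lambda>\<omega>. exp (s * Z \<omega>))"
proof -
  let ?A = "{\<omega>\<in>space M. Z \<omega> \<ge> a}"
  have A: "?A \<in> sets M" using Z by measurable
  have "prob ?A = expectation (indicator ?A)"
    using A by (simp add: Int_absorb2 sets.sets_into_space)
  also have "\<dots> \<le> expectation (\<lambda>\<omega>. exp (- s * a) * exp (s * Z \<omega>))"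
  proof (rule integral_mono)
    show "integrable M (indicator ?A :: 'a \<Rightarrow> real)"
      by (rule integrable_const_bound[where B=1]) (use A in auto)
    show "integrable M (\<lambda>\<omega>. exp (- s * a) * exp (s * Z \<omega>))" using int by simp
    fix \<omega> assume "\<omega> \<in> space M"
    show "indicator ?A \<omega> \<le> exp (- s * a) * exp (s * Z \<omega>)"
    proof (cases "\<omega> \<in> ?A")
      case True
      then have "0 \<le> s * (Z \<omega> - a)" using s by simp
      then have "1 \<le> exp (s * (Z \<omega> - a))" by simp
      also have "\<dots> = exp (- s * a) * exp (s * Z \<omega>)" by (simp add: exp_add[symmetric] algebra_simps)
      finally show ?thesis using True by simp
    qed simp
  qed
  also have "\<dots> = exp (- s * a) * expectation (\<lambda>\<omega>. exp (s * Z \<omega>))" by simp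
  finally show ?thesis .
qed

lemma bernstein_mgf_le:
  fixes Y :: "'a \<Rightarrow> real"
  assumes Y: "Y \<in> borel_measurable M" and bnd: "\<And>\<omega>. \<omega> \<in> space M \<Longrightarrow> \<bar>Y \<omega>\<bar> \<le> B"
    and mu: "\<mu> = expectation Y"
    and up: "\<And>\<omega>. \<omega> \<in> space M \<Longrightarrow> Y \<omega> - \<mu> \<le> b"
    and var: "expectation (\<lambda>\<omega>. (Y \<omega> - \<mu>)^2) \<le> V"
    and s: "0 \<le> s" "s * b < 3" and b: "0 \<le> b"
  shows "expectation (\<lambda>\<omega>. exp (s * (Y \<omega> - \<mu>))) \<le> exp (s^2 * V / (2 * (1 - s * b / 3)))"
proof -
  define D where "D = 2 * (1 - s * b / 3)"
  have D: "D > 0" using s by (simp add: D_def mult.commute)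
  have intY: "integrable M Y"
    by (rule integrable_const_bound[where B=B]) (use bnd Y in auto)
  have intY2: "integrable M (\<lambda>\<omega>. (Y \<omega> - \<mu>)^2)"
  proof (rule integrable_const_bound[where B="(B + \<bar>\<mu>\<bar>)^2"])
    show "AE x in M. norm ((Y x - \<mu>)\<^sup>2) \<le> (B + \<bar>\<mu>\<bar>)\<^sup>2"
    proof (rule AE_I2)
      fix x assume x: "x \<in> space M"
      have "\<bar>Y x - \<mu>\<bar> \<le> B + \<bar>\<mu>\<bar>" using bnd[OF x] by linarith
      then have "\<bar>Y x - \<mu>\<bar>^2 \<le> (B + \<bar>\<mu>\<bar>)^2" by (rule power_mono) simp
      then show "norm ((Y x - \<mu>)\<^sup>2) \<le> (B + \<bar>\<mu>\<bar>)\<^sup>2" by simp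
    qed
  qed (use Y in measurable)
  have pt: "exp (s * (Y \<omega> - \<mu>)) \<le> 1 + s * (Y \<omega> - \<mu>) + s^2 / D * (Y \<omega> - \<mu>)^2" if "\<omega> \<in> space M" for \<omega>
  proof -
    have sb: "s * (Y \<omega> - \<mu>) \<le> s * b" using up[OF that] s by (simp add: mult_left_mono)
    have "exp (s * (Y \<omega> - \<mu>)) \<le> 1 + s * (Y \<omega> - \<mu>) + (s * (Y \<omega> - \<mu>))^2 / (2 * (1 - s * b / 3))"
      by (rule exp_le_bernstein[OF sb mult_nonneg_nonneg[OF s(1) b] s(2)])
    then show ?thesis by (simp add: D_def power_mult_distrib)
  qed
  have intR: "integrable M (\<lambda>\<omega>. 1 + s * (Y \<omega> - \<mu>) + s^2 / D * (Y \<omega> - \<mu>)^2)"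
    using intY intY2 by auto
  have intL: "integrable M (\<lambda>\<omega>. exp (s * (Y \<omega> - \<mu>)))"
  proof (rule Bochner_Integration.integrable_bound[OF intR])
    show "(\<lambda>\<omega>. exp (s * (Y \<omega> - \<mu>))) \<in> borel_measurable M" using Y by measurable
    show "AE \<omega> in M. norm (exp (s * (Y \<omega> - \<mu>))) \<le> norm (1 + s * (Y \<omega> - \<mu>) + s^2 / D * (Y \<omega> - \<mu>)^2)"
      using pt by (intro AE_I2) (auto intro: order_trans[OF _ abs_ge_self])
  qed
  have "expectation (\<lambda>\<omega>. exp (s * (Y \<omega> - \<mu>))) \<le> expectation (\<lambda>\<omega>. 1 + s * (Y \<omega> - \<mu>) + s^2 / D * (Y \<omega> - \<mu>)^2)"
    by (rule integral_mono[OF intL intR pt])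
  also have "\<dots> = 1 + s * (expectation Y - \<mu>) + s^2 / D * expectation (\<lambda>\<omega>. (Y \<omega> - \<mu>)^2)"
    using intY intY2 by (simp add: prob_space)
  also have "\<dots> = 1 + s^2 / D * expectation (\<lambda>\<omega>. (Y \<omega> - \<mu>)^2)" using mu by simp
  also have "\<dots> \<le> 1 + s^2 / D * V"
    using var D by (intro add_left_mono mult_left_mono) auto
  also have "\<dots> \<le> exp (s^2 / D * V)" by (rule exp_ge_add_one_self)
  finally show ?thesis by (simp add: D_def)
qed

lemma hoeffding_mgf_le:
  fixes Y :: "'a \<Rightarrow> real"
  assumes Y: "Y \<in> borel_measurable M" and bnd: "\<And>\<omega>. \<omega> \<in> space M \<Longrightarrow> Y \<omega> \<in> {a..b}"
    and s: "s > 0"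
  shows "expectation (\<lambda>\<omega>. exp (s * (Y \<omega> - expectation Y))) \<le> exp (s^2 * (b - a)^2 / 8)"
proof -
  interpret ibrv: interval_bounded_random_variable M Y a b
    by unfold_locales (use Y bnd in auto)
  have intY: "integrable M Y" by (rule ibrv.integrable)
  have int: "integrable M (\<lambda>\<omega>. exp (s * (Y \<omega> - expectation Y)))"
  proof (rule integrable_const_bound[where B="exp (s * (b - a))"])
    show "AE x in M. norm (exp (s * (Y x - expectation Y))) \<le> exp (s * (b - a))"
    proof (rule AE_I2)
      fix x assume x: "x \<in> space M"
      have "expectation (\<lambda>_. a) \<le> expectation Y"
        by (rule integral_mono) (use intY bnd in auto)
      then have "expectation Y \<ge> a" by (simp add: prob_space)
      then have "Y x - expectation Y \<le> b - a" using bnd[OF x] by simp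
      then show "norm (exp (s * (Y x - expectation Y))) \<le> exp (s * (b - a))"
        using s by (simp add: mult_left_mono)
    qed
  qed (use Y in measurable)
  have "ennreal (expectation (\<lambda>\<omega>. exp (s * (Y \<omega> - expectation Y)))) = (\<integral>\<^sup>+\<omega>. exp (s * (Y \<omega> - expectation Y)) \<partial>M)"
    by (rule nn_integral_eq_integral[OF int, symmetric]) simp
  also have "\<dots> \<le> ennreal (exp (s^2 * (b - a)^2 / 8))"
    by (rule ibrv.Hoeffdings_lemma_nn_integral[OF s])
  finally show ?thesis by (simp add: ennreal_le_iff)
qed

lemma chernoff_of_mgf_power_le:
  fixes U :: "'a \<Rightarrow> real" and k :: nat
  assumes U: "U \<in> borel_measurable M" and k: "k > 0" and s: "s > 0"
    and int: "integrable M (\<lambda>\<omega>. exp ((real k * s) * (U \<omega> - \<mu>)))"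
    and E: "expectation (\<lambda>\<omega>. exp ((real k * s) * (U \<omega> - \<mu>))) \<le> exp \<phi> ^ k"
  shows "prob {\<omega>\<in>space M. U \<omega> - \<mu> \<ge> \<epsilon>} \<le> exp (- (real k * s) * \<epsilon> + real k * \<phi>)"
proof -
  have "prob {\<omega>\<in>space M. U \<omega> - \<mu> \<ge> \<epsilon>}
      \<le> exp (- (real k * s) * \<epsilon>) * expectation (\<lambda>\<omega>. exp ((real k * s) * (U \<omega> - \<mu>)))"
    by (rule chernoff_prob_ge[where Z="\<lambda>\<omega>. U \<omega> - \<mu>"]) (use U s k int in auto)
  also have "\<dots> \<le> exp (- (real k * s) * \<epsilon>) * exp \<phi> ^ k"
    using E by (intro mult_left_mono) auto
  also have "\<dots> = exp (- (real k * s) * \<epsilon> + real k * \<phi>)"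
    by (simp only: exp_of_nat_mult exp_add)
  finally show ?thesis .
qed

lemma bernstein_tail_of_mgf_le:
  fixes U :: "'a \<Rightarrow> real" and k :: nat
  assumes U: "U \<in> borel_measurable M" and k: "k > 0" and b: "b > 0" and V: "V \<ge> 0" and L: "L > 0"
    and mgf: "\<And>s. 0 < s \<Longrightarrow> s * b < 3 \<Longrightarrow> integrable M (\<lambda>\<omega>. exp ((real k * s) * (U \<omega> - \<mu>))) \<and>
        expectation (\<lambda>\<omega>. exp ((real k * s) * (U \<omega> - \<mu>))) \<le> exp (s^2 * V / (2 * (1 - s * b / 3))) ^ k"
  shows "prob {\<omega>\<in>space M. U \<omega> - \<mu> \<ge> sqrt (2 * V * L / real k) + 2 * b * L / (3 * real k)} \<le> exp (- L)"
proof -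
  define \<epsilon> where "\<epsilon> = sqrt (2 * V * L / real k) + 2 * b * L / (3 * real k)"
  have tail: "prob {\<omega>\<in>space M. U \<omega> - \<mu> \<ge> \<epsilon>} \<le> exp (- L)"
    if s: "0 < s" "s * b < 3"
      and exponent: "- (real k * s) * \<epsilon> + real k * (s^2 * V / (2 * (1 - s * b / 3))) \<le> - L" for s
  proof -
    from mgf[OF s] have "prob {\<omega>\<in>space M. U \<omega> - \<mu> \<ge> \<epsilon>}
        \<le> exp (- (real k * s) * \<epsilon> + real k * (s^2 * V / (2 * (1 - s * b / 3))))"
      by (intro chernoff_of_mgf_power_le[OF U k s(1)]) auto
    also have "\<dots> \<le> exp (- L)" using exponent by simp
    finally show ?thesis .
  qed
  have "prob {\<omega>\<in>space M. U \<omega> - \<mu> \<ge> \<epsilon>} \<le> exp (- L)"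
  proof (cases "V = 0")
    case True
    then have "\<epsilon> = 2 * b * L / (3 * real k)" by (simp add: \<epsilon>_def)
    then have "- (real k * (3 / (2 * b))) * \<epsilon> = - L" using b k by (simp add: field_simps)
    then show ?thesis
      using True b by (intro tail[of "3 / (2 * b)"]) auto
  next
    case False
    with V have "V > 0" by simp
    then obtain s where "0 < s" "s * b < 3"
      "- (real k * s) * \<epsilon> + real k * (s^2 * V / (2 * (1 - s * b / 3))) \<le> - L"
      by (rule bernstein_exponent_le[OF k b _ L]) (unfold \<epsilon>_def, blast)
    then show ?thesis by (rule tail)
  qed
  then show ?thesis by (simp add: \<epsilon>_def)
qed

lemma hoeffding_tail_of_mgf_le:
  fixes U :: "'a \<Rightarrow> real" and k :: nat
  assumes U: "U \<in> borel_measurable M" and k: "k > 0" and c: "c > 0" and L: "L > 0"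
    and mgf: "\<And>s. 0 < s \<Longrightarrow> integrable M (\<lambda>\<omega>. exp ((real k * s) * (U \<omega> - \<mu>))) \<and>
        expectation (\<lambda>\<omega>. exp ((real k * s) * (U \<omega> - \<mu>))) \<le> exp (s^2 * c / 8) ^ k"
  shows "prob {\<omega>\<in>space M. U \<omega> - \<mu> \<ge> sqrt (c * L / (2 * real k))} \<le> exp (- L)"
proof -
  define \<epsilon> where "\<epsilon> = sqrt (c * L / (2 * real k))"
  have e0: "\<epsilon> > 0" using c L k by (simp add: \<epsilon>_def)
  have e2: "\<epsilon>^2 = c * L / (2 * real k)" using c L k by (simp add: \<epsilon>_def)
  define s where "s = 4 * \<epsilon> / c"
  have s0: "s > 0" using e0 c by (simp add: s_def)
  from mgf[OF s0] have "prob {\<omega>\<in>space M. U \<omega> - \<mu> \<ge> \<epsilon>} \<le> exp (- (real k * s) * \<epsilon> + real k * (s^2 * c / 8))"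
    by (intro chernoff_of_mgf_power_le[OF U k s0]) auto
  also have "- (real k * s) * \<epsilon> + real k * (s^2 * c / 8) = - 2 * real k * \<epsilon>^2 / c"
    using c by (simp add: s_def field_simps power2_eq_square)
  also have "\<dots> = - L" using c k by (simp add: e2 field_simps)
  finally show ?thesis by (simp add: \<epsilon>_def)
qed

lemma variance_le_half_mean:
  fixes Z :: "'a \<Rightarrow> real"
  assumes Z: "Z \<in> borel_measurable M" and r: "\<And>\<omega>. \<omega> \<in> space M \<Longrightarrow> 0 \<le> Z \<omega> \<and> Z \<omega> \<le> 1/2"
    and v: "v = expectation Z"
  shows "expectation (\<lambda>\<omega>. (Z \<omega> - v)^2) \<le> v / 2"
proof -
  have intZ: "integrable M Z"
    by (rule integrable_const_bound[where B="1/2"]) (use Z r in auto)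
  have int2: "integrable M (\<lambda>\<omega>. (Z \<omega> - v)^2)"
  proof (rule integrable_const_bound[where B="(1/2 + \<bar>v\<bar>)^2"])
    show "AE x in M. norm ((Z x - v)\<^sup>2) \<le> (1/2 + \<bar>v\<bar>)\<^sup>2"
    proof (rule AE_I2)
      fix x assume x: "x \<in> space M"
      have "\<bar>Z x - v\<bar> \<le> 1/2 + \<bar>v\<bar>" using r[OF x] by linarith
      then have "\<bar>Z x - v\<bar>^2 \<le> (1/2 + \<bar>v\<bar>)^2" by (rule power_mono) simp
      then show "norm ((Z x - v)\<^sup>2) \<le> (1/2 + \<bar>v\<bar>)\<^sup>2" by simp
    qed
  qed (use Z in measurable)
  have pt: "(Z \<omega> - v)^2 \<le> Z \<omega> / 2 - 2 * v * Z \<omega> + v^2" if "\<omega> \<in> space M" for \<omega>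
  proof -
    have "Z \<omega> * Z \<omega> \<le> Z \<omega> * (1/2)" using r[OF that] by (intro mult_left_mono) auto
    then show ?thesis by (simp add: power2_eq_square algebra_simps)
  qed
  have "expectation (\<lambda>\<omega>. (Z \<omega> - v)^2) \<le> expectation (\<lambda>\<omega>. Z \<omega> / 2 - 2 * v * Z \<omega> + v^2)"
    by (rule integral_mono[OF int2 _ pt]) (use intZ in auto)
  also have "\<dots> = v / 2 - 2 * v * v + v^2" using intZ v by (simp add: prob_space)
  also have "\<dots> \<le> v / 2" by (simp add: power2_eq_square)
  finally show ?thesis .
qed

lemma prob_ge_one_minus_of_two_exceptions:
  assumes G: "{\<omega>\<in>space M. P \<omega>} \<in> events" and A1: "A1 \<in> events" and A2: "A2 \<in> events"
    and p1: "prob A1 \<le> \<delta> / 2" and p2: "prob A2 \<le> \<delta> / 2"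
    and cov: "\<And>\<omega>. \<omega> \<in> space M \<Longrightarrow> \<not> P \<omega> \<Longrightarrow> \<omega> \<in> A1 \<or> \<omega> \<in> A2"
  shows "prob {\<omega>\<in>space M. P \<omega>} \<ge> 1 - \<delta>"
proof -
  have "space M - {\<omega>\<in>space M. P \<omega>} \<subseteq> A1 \<union> A2" using cov by auto
  then have "prob (space M - {\<omega>\<in>space M. P \<omega>}) \<le> prob (A1 \<union> A2)"
    using A1 A2 by (intro finite_measure_mono) auto
  also have "\<dots> \<le> prob A1 + prob A2"
    using A1 A2 by (intro measure_subadditive) auto
  finally have "1 - prob {\<omega>\<in>space M. P \<omega>} \<le> \<delta>" using prob_compl[OF G] p1 p2 by simp
  then show ?thesis by simp
qed

end

section \<open>Independent identically distributed samples\<close>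

locale iid_seq = prob_space M for M :: "'a measure" +
  fixes S :: "'b measure" and X :: "nat \<Rightarrow> 'a \<Rightarrow> 'b" and n :: nat
  assumes X_meas: "\<And>i. i < n \<Longrightarrow> X i \<in> M \<rightarrow>\<^sub>M S"
    and indep: "indep_vars (\<lambda>_. S) X {..<n}"
    and ident: "\<And>i. i < n \<Longrightarrow> distr M S (X i) = distr M S (X 0)"
begin

lemma indep_vars_reindex:
  assumes inj: "inj_on e J" and sub: "e ` J \<subseteq> {..<n}"
  shows "indep_vars (\<lambda>_. S) (\<lambda>j. X (e j)) J"
proof -
  have "indep_vars (\<lambda>j. PiM {e j} (\<lambda>_. S)) (\<lambda>j \<omega>. restrict (\<lambda>i. X i \<omega>) {e j}) J"
    by (rule indep_vars_restrict[OF indep]) (use inj sub in \<open>auto simp: disjoint_family_on_def inj_on_def\<close>)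
  then have "indep_vars (\<lambda>_. S) (\<lambda>j \<omega>. (\<lambda>z. z (e j)) (restrict (\<lambda>i. X i \<omega>) {e j})) J"
    by (rule indep_vars_compose2) (auto intro: measurable_component_singleton)
  then show ?thesis
    by (rule indep_vars_cong[THEN iffD1, rotated -1]) auto
qed

lemma measurable_block:
  assumes "\<And>j. j < r \<Longrightarrow> e j < n"
  shows "(\<lambda>\<omega>. \<lambda>j\<in>{..<r}. X (e j) \<omega>) \<in> M \<rightarrow>\<^sub>M PiM {..<r} (\<lambda>_. S)"
  by (rule measurable_restrict) (use assms X_meas in auto)

lemma distr_block:
  assumes r: "0 < r" and inj: "inj_on e {..<r}" and sub: "e ` {..<r} \<subseteq> {..<n}"
  shows "distr M (PiM {..<r} (\<lambda>_. S)) (\<lambda>\<omega>. \<lambda>j\<in>{..<r}. X (e j) \<omega>) = PiM {..<r} (\<lambda>_. distr M S (X 0))"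
proof -
  have ne: "{..<r} \<noteq> {}" using r by auto
  have rv: "\<And>j. j \<in> {..<r} \<Longrightarrow> random_variable S (X (e j))" using sub X_meas by auto
  have "distr M (PiM {..<r} (\<lambda>_. S)) (\<lambda>\<omega>. \<lambda>j\<in>{..<r}. X (e j) \<omega>) = PiM {..<r} (\<lambda>j. distr M S (X (e j)))"
    using indep_vars_iff_distr_eq_PiM'[OF ne rv] indep_vars_reindex[OF inj sub] by simp
  also have "\<dots> = PiM {..<r} (\<lambda>_. distr M S (X 0))"
    by (rule PiM_cong) (use sub ident in auto)
  finally show ?thesis .
qed

lemma integral_block:
  fixes f :: "(nat \<Rightarrow> 'b) \<Rightarrow> real"
  assumes r: "0 < r" "r \<le> n" and inj: "inj_on e {..<r}" and sub: "e ` {..<r} \<subseteq> {..<n}"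
    and f: "f \<in> borel_measurable (PiM {..<r} (\<lambda>_. S))"
  shows "(\<integral>\<omega>. f (\<lambda>j\<in>{..<r}. X (e j) \<omega>) \<partial>M) = (\<integral>\<omega>. f (\<lambda>j\<in>{..<r}. X j \<omega>) \<partial>M)"
proof -
  have m1: "(\<lambda>\<omega>. \<lambda>j\<in>{..<r}. X (e j) \<omega>) \<in> M \<rightarrow>\<^sub>M PiM {..<r} (\<lambda>_. S)"
    by (rule measurable_block) (use sub in auto)
  have m2: "(\<lambda>\<omega>. \<lambda>j\<in>{..<r}. X j \<omega>) \<in> M \<rightarrow>\<^sub>M PiM {..<r} (\<lambda>_. S)"
    using measurable_block[of r "\<lambda>j. j"] r by auto
  have "(\<integral>\<omega>. f (\<lambda>j\<in>{..<r}. X (e j) \<omega>) \<partial>M) = integral\<^sup>L (distr M (PiM {..<r} (\<lambda>_. S)) (\<lambda>\<omega>. \<lambda>j\<in>{..<r}. X (e j) \<omega>)) f"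
    by (rule integral_distr[OF m1 f, symmetric])
  also have "\<dots> = integral\<^sup>L (distr M (PiM {..<r} (\<lambda>_. S)) (\<lambda>\<omega>. \<lambda>j\<in>{..<r}. X j \<omega>)) f"
    using distr_block[OF r(1) inj sub] distr_block[OF r(1), of "\<lambda>j. j"] r by auto
  also have "\<dots> = (\<integral>\<omega>. f (\<lambda>j\<in>{..<r}. X j \<omega>) \<partial>M)"
    by (rule integral_distr[OF m2 f])
  finally show ?thesis .
qed

lemma measurable_ustat:
  assumes g: "g \<in> borel_measurable (PiM {..<r} (\<lambda>_. S))"
  shows "(\<lambda>\<omega>. ustat g r n (\<lambda>i. X i \<omega>)) \<in> borel_measurable M"
proof -
  have *: "(\<lambda>\<omega>. g (\<lambda>j\<in>{..<r}. X (sorted_list_of_set K ! j) \<omega>)) \<in> borel_measurable M"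
    if K: "K \<in> {K. K \<subseteq> {..<n} \<and> card K = r}" for K
  proof -
    have fin: "finite K" using K finite_subset by auto
    have "sorted_list_of_set K ! j < n" if j: "j < r" for j
    proof -
      have "sorted_list_of_set K ! j \<in> set (sorted_list_of_set K)"
        using j K fin by (intro nth_mem) simp
      then show ?thesis using K fin by auto
    qed
    then show ?thesis by (rule measurable_compose[OF measurable_block g])
  qed
  show ?thesis unfolding ustat_def
    by (rule borel_measurable_divide[OF borel_measurable_sum]) (use * in auto)
qed

lemma indep_vars_blocks:
  fixes f :: "nat \<Rightarrow> (nat \<Rightarrow> 'b) \<Rightarrow> real"
  assumes f: "\<And>i. i \<in> I \<Longrightarrow> f i \<in> borel_measurable (PiM {..<r} (\<lambda>_. S))"
    and e: "\<And>i j. i \<in> I \<Longrightarrow> j < r \<Longrightarrow> e i j < n"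
    and dis: "\<And>i i' j j'. i \<in> I \<Longrightarrow> i' \<in> I \<Longrightarrow> j < r \<Longrightarrow> j' < r \<Longrightarrow> e i j = e i' j' \<Longrightarrow> i = i'"
  shows "indep_vars (\<lambda>_. borel) (\<lambda>i \<omega>. f i (\<lambda>j\<in>{..<r}. X (e i j) \<omega>)) I"
proof -
  define Kset where "Kset i = e i ` {..<r}" for i
  have Ksub: "Kset i \<subseteq> {..<n}" if "i \<in> I" for i using e that by (auto simp: Kset_def)
  have disj: "disjoint_family_on Kset I"
    unfolding disjoint_family_on_def Kset_def using dis by blast
  have ind0: "indep_vars (\<lambda>i. PiM (Kset i) (\<lambda>_. S)) (\<lambda>i \<omega>. restrict (\<lambda>i. X i \<omega>) (Kset i)) I"
    by (rule indep_vars_restrict[OF indep Ksub disj])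
  define \<Phi> where "\<Phi> i z = f i (\<lambda>j\<in>{..<r}. z (e i j))" for i z
  have \<Phi>m: "\<Phi> i \<in> borel_measurable (PiM (Kset i) (\<lambda>_. S))" if "i \<in> I" for i
  proof -
    have "(\<lambda>z. \<lambda>j\<in>{..<r}. z (e i j)) \<in> PiM (Kset i) (\<lambda>_. S) \<rightarrow>\<^sub>M PiM {..<r} (\<lambda>_. S)"
      by (rule measurable_restrict) (auto simp: Kset_def intro!: measurable_component_singleton)
    then show ?thesis unfolding \<Phi>_def by (rule measurable_compose[OF _ f[OF that]])
  qed
  have "indep_vars (\<lambda>_. borel) (\<lambda>i \<omega>. \<Phi> i (restrict (\<lambda>i. X i \<omega>) (Kset i))) I"
    by (rule indep_vars_compose2[OF ind0 \<Phi>m])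
  moreover have "(\<lambda>\<omega>. \<Phi> i (restrict (\<lambda>i. X i \<omega>) (Kset i))) = (\<lambda>\<omega>. f i (\<lambda>j\<in>{..<r}. X (e i j) \<omega>))" for i
    unfolding \<Phi>_def by (intro ext arg_cong[where f="f i"] restrict_ext) (auto simp: Kset_def)
  ultimately show ?thesis by simp
qed

lemma mgf_block_sum:
  fixes g :: "(nat \<Rightarrow> 'b) \<Rightarrow> real" and s :: real
  assumes g: "g \<in> borel_measurable (PiM {..<r} (\<lambda>_. S))"
    and gb: "\<And>x. x \<in> space (PiM {..<r} (\<lambda>_. S)) \<Longrightarrow> \<bar>g x\<bar> \<le> B"
    and r: "1 \<le> r" "r \<le> n" and l: "l \<in> permutations_of_set {..<n}"
  defines "Z \<equiv> \<lambda>\<omega>. exp (s * (\<Sum>i<n div r. g (\<lambda>j\<in>{..<r}. X (l ! (i * r + j)) \<omega>)))"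
  shows "integrable M Z \<and> integral\<^sup>L M Z = (\<integral>\<omega>. exp (s * g (\<lambda>j\<in>{..<r}. X j \<omega>)) \<partial>M) ^ (n div r)"
proof -
  define k where "k = n div r"
  define blk where "blk i \<omega> = (\<lambda>j\<in>{..<r}. X (l ! (i * r + j)) \<omega>)" for i \<omega>
  have idx: "l ! (i * r + j) < n" if "i < k" "j < r" for i j
    using permutation_block_index_less l that by (simp add: k_def)
  have blkm: "blk i \<in> M \<rightarrow>\<^sub>M PiM {..<r} (\<lambda>_. S)" if "i < k" for i
    unfolding blk_def by (rule measurable_block) (rule idx[OF that])
  have ind: "indep_vars (\<lambda>_. borel) (\<lambda>i \<omega>. exp (s * g (blk i \<omega>))) {..<k}"
    unfolding blk_def
  proof (rule indep_vars_blocks)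
    show "\<And>i i' j j'. i \<in> {..<k} \<Longrightarrow> i' \<in> {..<k} \<Longrightarrow> j < r \<Longrightarrow> j' < r \<Longrightarrow>
            l ! (i * r + j) = l ! (i' * r + j') \<Longrightarrow> i = i'"
      using permutation_block_index_inj[OF l] by (auto simp: k_def)
  qed (use g idx in auto)
  have intg: "integrable M (\<lambda>\<omega>. exp (s * g (blk i \<omega>)))" if "i \<in> {..<k}" for i
    using that gb measurable_space[OF blkm]
    by (intro integrable_exp_bounded[where B=B] measurable_compose[OF blkm g]) auto
  have ints: "(\<integral>\<omega>. exp (s * g (blk i \<omega>)) \<partial>M) = (\<integral>\<omega>. exp (s * g (\<lambda>j\<in>{..<r}. X j \<omega>)) \<partial>M)"
    if "i \<in> {..<k}" for i
    unfolding blk_def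
  proof (rule integral_block)
    show "inj_on (\<lambda>j. l ! (i * r + j)) {..<r}"
      using permutation_block_index_inj[OF l] that by (auto simp: inj_on_def k_def)
    show "(\<lambda>j. l ! (i * r + j)) ` {..<r} \<subseteq> {..<n}" using idx that by auto
  qed (use r g in auto)
  have "Z = (\<lambda>\<omega>. \<Prod>i<k. exp (s * g (blk i \<omega>)))"
    unfolding Z_def blk_def k_def by (simp add: exp_sum[symmetric] sum_distrib_left)
  then show ?thesis
    using indep_vars_integrable[OF _ ind intg] indep_vars_lebesgue_integral[OF _ ind intg] ints
    by (simp add: k_def)
qed

text \<open>Hoeffding's bound: by Jensen's inequality applied to \<open>ustat_eq_average_block_means\<close>,
  the moment generating function of a U-statistic is at most that of the mean of \<open>n div r\<close>
  independent copies of the kernel.\<close>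

lemma mgf_ustat_le:
  fixes g :: "(nat \<Rightarrow> 'b) \<Rightarrow> real" and s :: real
  assumes g: "g \<in> borel_measurable (PiM {..<r} (\<lambda>_. S))"
    and gb: "\<And>x. x \<in> space (PiM {..<r} (\<lambda>_. S)) \<Longrightarrow> \<bar>g x\<bar> \<le> B"
    and sym: "sym_kernel S r g" and r: "1 \<le> r" "r \<le> n"
  shows "integrable M (\<lambda>\<omega>. exp (real (n div r) * s * ustat g r n (\<lambda>i. X i \<omega>))) \<and>
         (\<integral>\<omega>. exp (real (n div r) * s * ustat g r n (\<lambda>i. X i \<omega>)) \<partial>M)
           \<le> (\<integral>\<omega>. exp (s * g (\<lambda>j\<in>{..<r}. X j \<omega>)) \<partial>M) ^ (n div r)"
proof -
  define k where "k = n div r"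
  let ?P = "permutations_of_set {..<n}"
  define Z where "Z l \<omega> = exp (s * (\<Sum>i<k. g (\<lambda>j\<in>{..<r}. X (l ! (i * r + j)) \<omega>)))" for l \<omega>
  define c where "c = (\<integral>\<omega>. exp (s * g (\<lambda>j\<in>{..<r}. X j \<omega>)) \<partial>M)"
  have kpos: "k > 0" using r by (auto simp: k_def div_greater_zero_iff)
  have Zl: "integrable M (Z l) \<and> integral\<^sup>L M (Z l) = c ^ k" if "l \<in> ?P" for l
    using mgf_block_sum[OF g gb r that, of s] unfolding Z_def c_def k_def by (simp add: fun_eq_iff)
  have N: "card ?P = fact n" by simp
  have jensen: "exp (real k * s * ustat g r n (\<lambda>i. X i \<omega>)) \<le> (\<Sum>l\<in>?P. Z l \<omega>) / fact n"
    if \<omega>: "\<omega> \<in> space M" for \<omega>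
  proof -
    have Y: "X i \<omega> \<in> space S" if "i < n" for i using measurable_space[OF X_meas[OF that] \<omega>] .
    have "real k * s * ustat g r n (\<lambda>i. X i \<omega>)
        = (\<Sum>l\<in>?P. (1 / fact n) * (s * (\<Sum>i<k. g (\<lambda>j\<in>{..<r}. X (l ! (i * r + j)) \<omega>))))"
      using ustat_eq_average_block_means[OF sym r Y] kpos
      by (simp add: k_def sum_distrib_left sum_divide_distrib)
    also have "exp \<dots> \<le> (\<Sum>l\<in>?P. (1 / fact n) * Z l \<omega>)"
      using convex_on_sum[OF _ _ exp_convex, of ?P "\<lambda>_. 1 / fact n"
          "\<lambda>l. s * (\<Sum>i<k. g (\<lambda>j\<in>{..<r}. X (l ! (i * r + j)) \<omega>))"] N
      by (simp add: Z_def)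
    also have "\<dots> = (\<Sum>l\<in>?P. Z l \<omega>) / fact n"
      by (simp add: sum_divide_distrib)
    finally show ?thesis .
  qed
  have intR: "integrable M (\<lambda>\<omega>. (\<Sum>l\<in>?P. Z l \<omega>) / fact n)"
    using Zl by (intro integrable_divide_zero integrable_sum) auto
  have intL: "integrable M (\<lambda>\<omega>. exp (real k * s * ustat g r n (\<lambda>i. X i \<omega>)))"
  proof (rule Bochner_Integration.integrable_bound[OF intR])
    show "(\<lambda>\<omega>. exp (real k * s * ustat g r n (\<lambda>i. X i \<omega>))) \<in> borel_measurable M"
      using measurable_ustat[OF g] by measurable
    show "AE \<omega> in M. norm (exp (real k * s * ustat g r n (\<lambda>i. X i \<omega>))) \<le> norm ((\<Sum>l\<in>?P. Z l \<omega>) / fact n)"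
    proof (rule AE_I2)
      fix \<omega> assume \<omega>: "\<omega> \<in> space M"
      have "0 \<le> (\<Sum>l\<in>?P. Z l \<omega>)" by (simp add: Z_def sum_nonneg)
      then show "norm (exp (real k * s * ustat g r n (\<lambda>i. X i \<omega>))) \<le> norm ((\<Sum>l\<in>?P. Z l \<omega>) / fact n)"
        using jensen[OF \<omega>] by simp
    qed
  qed
  have "(\<integral>\<omega>. exp (real k * s * ustat g r n (\<lambda>i. X i \<omega>)) \<partial>M) \<le> (\<integral>\<omega>. (\<Sum>l\<in>?P. Z l \<omega>) / fact n \<partial>M)"
    by (rule integral_mono[OF intL intR jensen])
  also have "\<dots> = (\<Sum>l\<in>?P. c ^ k) / fact n"
    using Zl by (simp add: integral_sum)
  also have "\<dots> = c ^ k" using N by simp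
  finally show ?thesis using intL by (simp add: c_def k_def)
qed

lemma mgf_ustat_centered_le:
  fixes g :: "(nat \<Rightarrow> 'b) \<Rightarrow> real" and s \<mu> :: real
  assumes g: "g \<in> borel_measurable (PiM {..<r} (\<lambda>_. S))"
    and gb: "\<And>x. x \<in> space (PiM {..<r} (\<lambda>_. S)) \<Longrightarrow> \<bar>g x\<bar> \<le> B"
    and sym: "sym_kernel S r g" and r: "1 \<le> r" "r \<le> n"
  shows "integrable M (\<lambda>\<omega>. exp ((real (n div r) * s) * (ustat g r n (\<lambda>i. X i \<omega>) - \<mu>))) \<and>
         expectation (\<lambda>\<omega>. exp ((real (n div r) * s) * (ustat g r n (\<lambda>i. X i \<omega>) - \<mu>)))
           \<le> expectation (\<lambda>\<omega>. exp (s * (g (\<lambda>j\<in>{..<r}. X j \<omega>) - \<mu>))) ^ (n div r)"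
proof -
  have "ustat (\<lambda>x. g x - \<mu>) r n Y = ustat g r n Y - \<mu>" for Y
    using ustat_affine[OF r(2), of "- \<mu>" 1 g Y] by simp
  moreover have "sym_kernel S r (\<lambda>x. g x - \<mu>)"
    using sym unfolding sym_kernel_def by simp
  moreover have "\<bar>g x - \<mu>\<bar> \<le> B + \<bar>\<mu>\<bar>" if "x \<in> space (PiM {..<r} (\<lambda>_. S))" for x
    using gb[OF that] by linarith
  ultimately show ?thesis
    using mgf_ustat_le[of "\<lambda>x. g x - \<mu>" r "B + \<bar>\<mu>\<bar>" s] g r by (simp add: mult.assoc)
qed

lemma ustat_bernstein_tail:
  fixes g :: "(nat \<Rightarrow> 'b) \<Rightarrow> real" and r :: nat
  defines "\<mu> \<equiv> expectation (\<lambda>\<omega>. g (\<lambda>j\<in>{..<r}. X j \<omega>))"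
  assumes g: "g \<in> borel_measurable (PiM {..<r} (\<lambda>_. S))"
    and gb: "\<And>x. x \<in> space (PiM {..<r} (\<lambda>_. S)) \<Longrightarrow> \<bar>g x\<bar> \<le> B"
    and sym: "sym_kernel S r g" and r: "1 \<le> r" "r \<le> n"
    and up: "\<And>x. x \<in> space (PiM {..<r} (\<lambda>_. S)) \<Longrightarrow> g x - \<mu> \<le> b" and b: "b > 0"
    and var: "expectation (\<lambda>\<omega>. (g (\<lambda>j\<in>{..<r}. X j \<omega>) - \<mu>)^2) \<le> V" and L: "L > 0"
  shows "prob {\<omega>\<in>space M. ustat g r n (\<lambda>i. X i \<omega>) - \<mu>
            \<ge> sqrt (2 * V * L / real (n div r)) + 2 * b * L / (3 * real (n div r))} \<le> exp (- L)"
proof (rule bernstein_tail_of_mgf_le[OF measurable_ustat[OF g] _ b _ L])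
  define G where "G \<omega> = g (\<lambda>j\<in>{..<r}. X j \<omega>)" for \<omega>
  have blk: "(\<lambda>\<omega>. \<lambda>j\<in>{..<r}. X j \<omega>) \<in> M \<rightarrow>\<^sub>M PiM {..<r} (\<lambda>_. S)"
    by (rule measurable_block) (use r in auto)
  have Gm: "G \<in> borel_measurable M" unfolding G_def by (rule measurable_compose[OF blk g])
  have Gs: "\<bar>G \<omega>\<bar> \<le> B" "G \<omega> - \<mu> \<le> b" if "\<omega> \<in> space M" for \<omega>
    unfolding G_def using gb up measurable_space[OF blk that] by auto
  show "0 < n div r" using r by (simp add: div_greater_zero_iff)
  have "0 \<le> expectation (\<lambda>\<omega>. (g (\<lambda>j\<in>{..<r}. X j \<omega>) - \<mu>)^2)"
    by (rule integral_nonneg_AE) simp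
  then show "0 \<le> V" using var by linarith
  fix s :: real assume s: "0 < s" "s * b < 3"
  have "expectation (\<lambda>\<omega>. exp (s * (G \<omega> - \<mu>))) \<le> exp (s^2 * V / (2 * (1 - s * b / 3)))"
    by (rule bernstein_mgf_le[OF Gm Gs(1) _ Gs(2)]) (use var s b in \<open>auto simp: G_def \<mu>_def\<close>)
  then have "expectation (\<lambda>\<omega>. exp (s * (G \<omega> - \<mu>))) ^ (n div r) \<le> exp (s^2 * V / (2 * (1 - s * b / 3))) ^ (n div r)"
    by (intro power_mono integral_nonneg_AE) auto
  then show "integrable M (\<lambda>\<omega>. exp ((real (n div r) * s) * (ustat g r n (\<lambda>i. X i \<omega>) - \<mu>))) \<and>
      expectation (\<lambda>\<omega>. exp ((real (n div r) * s) * (ustat g r n (\<lambda>i. X i \<omega>) - \<mu>)))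
        \<le> exp (s^2 * V / (2 * (1 - s * b / 3))) ^ (n div r)"
    using mgf_ustat_centered_le[OF g gb sym r, of s \<mu>] unfolding G_def by auto
qed

lemma ustat_hoeffding_tail:
  fixes g :: "(nat \<Rightarrow> 'b) \<Rightarrow> real" and r :: nat
  defines "\<mu> \<equiv> expectation (\<lambda>\<omega>. g (\<lambda>j\<in>{..<r}. X j \<omega>))"
  assumes g: "g \<in> borel_measurable (PiM {..<r} (\<lambda>_. S))"
    and range: "\<And>x. x \<in> space (PiM {..<r} (\<lambda>_. S)) \<Longrightarrow> a \<le> g x \<and> g x \<le> b" and ab: "a < b"
    and sym: "sym_kernel S r g" and r: "1 \<le> r" "r \<le> n" and L: "L > 0"
  shows "prob {\<omega>\<in>space M. ustat g r n (\<lambda>i. X i \<omega>) - \<mu> \<ge> sqrt ((b - a)^2 * L / (2 * real (n div r)))}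
           \<le> exp (- L)"
proof (rule hoeffding_tail_of_mgf_le[OF measurable_ustat[OF g] _ _ L])
  define G where "G \<omega> = g (\<lambda>j\<in>{..<r}. X j \<omega>)" for \<omega>
  have blk: "(\<lambda>\<omega>. \<lambda>j\<in>{..<r}. X j \<omega>) \<in> M \<rightarrow>\<^sub>M PiM {..<r} (\<lambda>_. S)"
    by (rule measurable_block) (use r in auto)
  have Gm: "G \<in> borel_measurable M" unfolding G_def by (rule measurable_compose[OF blk g])
  have Gs: "G \<omega> \<in> {a..b}" if "\<omega> \<in> space M" for \<omega>
    unfolding G_def using range measurable_space[OF blk that] by auto
  have gb: "\<bar>g x\<bar> \<le> \<bar>a\<bar> + \<bar>b\<bar>" if "x \<in> space (PiM {..<r} (\<lambda>_. S))" for x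
    using range[OF that] by linarith
  show "0 < n div r" using r by (simp add: div_greater_zero_iff)
  show "0 < (b - a)^2" using ab by simp
  fix s :: real assume s: "0 < s"
  have "expectation (\<lambda>\<omega>. exp (s * (G \<omega> - \<mu>))) \<le> exp (s^2 * (b - a)^2 / 8)"
    using hoeffding_mgf_le[OF Gm Gs s] by (simp add: G_def \<mu>_def)
  then have "expectation (\<lambda>\<omega>. exp (s * (G \<omega> - \<mu>))) ^ (n div r) \<le> exp (s^2 * (b - a)^2 / 8) ^ (n div r)"
    by (intro power_mono integral_nonneg_AE) auto
  then show "integrable M (\<lambda>\<omega>. exp ((real (n div r) * s) * (ustat g r n (\<lambda>i. X i \<omega>) - \<mu>))) \<and>
      expectation (\<lambda>\<omega>. exp ((real (n div r) * s) * (ustat g r n (\<lambda>i. X i \<omega>) - \<mu>)))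
        \<le> exp (s^2 * (b - a)^2 / 8) ^ (n div r)"
    using mgf_ustat_centered_le[OF g gb sym r, of s \<mu>] unfolding G_def by auto
qed

end

section \<open>Empirical Bernstein bounds for bounded symmetric kernels\<close>

locale iid_kernel = iid_seq +
  fixes h :: "(nat \<Rightarrow> 'b) \<Rightarrow> real" and m :: nat
  assumes h_meas: "h \<in> borel_measurable (PiM {..<m} (\<lambda>_. S))"
    and h_range: "\<And>x. x \<in> space (PiM {..<m} (\<lambda>_. S)) \<Longrightarrow> 0 \<le> h x \<and> h x \<le> 1"
    and h_sym: "sym_kernel S m h"
    and m_pos: "1 \<le> m" and two_m_le: "2 * m \<le> n"
begin

definition kernel_mean :: real where
  "kernel_mean = expectation (\<lambda>\<omega>. h (\<lambda>j\<in>{..<m}. X j \<omega>))"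

definition kernel_var :: real where
  "kernel_var = expectation (\<lambda>\<omega>. (h (\<lambda>j\<in>{..<m}. X j \<omega>) - kernel_mean)^2)"

lemma measurable_first_block: "(\<lambda>\<omega>. \<lambda>j\<in>{..<m}. X j \<omega>) \<in> M \<rightarrow>\<^sub>M PiM {..<m} (\<lambda>_. S)"
  by (rule measurable_block) (use two_m_le in auto)

lemma measurable_double_block: "(\<lambda>\<omega>. \<lambda>j\<in>{..<2*m}. X j \<omega>) \<in> M \<rightarrow>\<^sub>M PiM {..<2*m} (\<lambda>_. S)"
  by (rule measurable_block) (use two_m_le in auto)

lemma expectation_eta_tilde_eq_eta:
  "expectation (\<lambda>\<omega>. eta_tilde h m (\<lambda>j\<in>{..<2*m}. X j \<omega>))
     = expectation (\<lambda>\<omega>. eta h m (\<lambda>j\<in>{..<2*m}. X j \<omega>))"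
proof -
  let ?Pm = "{p. p permutes {..<2*m}}"
  define B' where "B' \<omega> = (\<lambda>j\<in>{..<2*m}. X j \<omega>)" for \<omega>
  have card: "card ?Pm = fact (2*m)" by (rule card_permutations) auto
  have etam: "eta h m \<in> borel_measurable (PiM {..<2*m} (\<lambda>_. S))"
    using eta_comp_measurable[OF h_meas permutes_id] by (simp add: comp_def)
  have int_p: "integrable M (\<lambda>\<omega>. eta h m (B' \<omega> \<circ> p))" if "p \<in> ?Pm" for p
  proof (rule integrable_bounded_real[where B="1/2"])
    show "(\<lambda>\<omega>. eta h m (B' \<omega> \<circ> p)) \<in> borel_measurable M"
      using measurable_compose[OF measurable_double_block eta_comp_measurable[OF h_meas]] that
      by (simp add: B'_def)
    fix \<omega> assume "\<omega> \<in> space M"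
    then show "\<bar>eta h m (B' \<omega> \<circ> p)\<bar> \<le> 1/2"
      using eta_comp_bounds[OF h_range measurable_space[OF measurable_double_block]] that
      by (fastforce simp: B'_def)
  qed
  txt \<open>Each rearrangement of the first \<open>2 m\<close> observations has the same joint law.\<close>
  have E_p: "expectation (\<lambda>\<omega>. eta h m (B' \<omega> \<circ> p)) = expectation (\<lambda>\<omega>. eta h m (B' \<omega>))"
    if "p \<in> ?Pm" for p
  proof -
    have p: "p permutes {..<2*m}" using that by simp
    have pj: "p j < 2 * m" if "j < 2 * m" for j using permutes_in_image[OF p] that by auto
    have "eta h m (B' \<omega> \<circ> p) = eta h m (\<lambda>j\<in>{..<2*m}. X (p j) \<omega>)" for \<omega>
      using pj by (intro eta_cong) (simp add: B'_def)
    then have "expectation (\<lambda>\<omega>. eta h m (B' \<omega> \<circ> p)) = expectation (\<lambda>\<omega>. eta h m (\<lambda>j\<in>{..<2*m}. X (p j) \<omega>))"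
      by simp
    also have "\<dots> = expectation (\<lambda>\<omega>. eta h m (\<lambda>j\<in>{..<2*m}. X j \<omega>))"
    proof (rule integral_block[OF _ _ _ _ etam])
      show "inj_on p {..<2*m}" using p permutes_inj_on by blast
      show "p ` {..<2*m} \<subseteq> {..<n}" using pj two_m_le by (auto intro: less_le_trans)
    qed (use m_pos two_m_le in auto)
    finally show ?thesis by (simp add: B'_def)
  qed
  have "expectation (\<lambda>\<omega>. eta_tilde h m (B' \<omega>))
      = (\<Sum>p\<in>?Pm. expectation (\<lambda>\<omega>. eta h m (B' \<omega> \<circ> p))) / fact (2*m)"
    unfolding eta_tilde_def using int_p by (simp add: integral_sum)
  also have "\<dots> = expectation (\<lambda>\<omega>. eta h m (B' \<omega>))"
    using E_p card by simp
  finally show ?thesis by (simp add: B'_def)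
qed

lemma integrable_kernel_block:
  assumes "\<And>j. j < m \<Longrightarrow> e j < n"
  shows "integrable M (\<lambda>\<omega>. h (\<lambda>j\<in>{..<m}. X (e j) \<omega>))"
proof (rule integrable_bounded_real[where B=1])
  show "(\<lambda>\<omega>. h (\<lambda>j\<in>{..<m}. X (e j) \<omega>)) \<in> borel_measurable M"
    by (rule measurable_compose[OF measurable_block[OF assms] h_meas])
  fix \<omega> assume "\<omega> \<in> space M"
  then show "\<bar>h (\<lambda>j\<in>{..<m}. X (e j) \<omega>)\<bar> \<le> 1"
    using h_range[OF measurable_space[OF measurable_block[OF assms]]] by fastforce
qed

lemma expectation_second_block:
  fixes f :: "(nat \<Rightarrow> 'b) \<Rightarrow> real"
  assumes "f \<in> borel_measurable (PiM {..<m} (\<lambda>_. S))"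
  shows "expectation (\<lambda>\<omega>. f (\<lambda>j\<in>{..<m}. X (m + j) \<omega>)) = expectation (\<lambda>\<omega>. f (\<lambda>j\<in>{..<m}. X j \<omega>))"
  by (rule integral_block[OF _ _ _ _ assms]) (use m_pos two_m_le in \<open>auto simp: inj_on_def\<close>)

text \<open>The two halves of the double block are independent copies of the first block.\<close>

lemma expectation_product_of_halves:
  "expectation (\<lambda>\<omega>. h (\<lambda>j\<in>{..<m}. X j \<omega>) * h (\<lambda>j\<in>{..<m}. X (m + j) \<omega>)) = kernel_mean * kernel_mean"
proof -
  have ind: "indep_vars (\<lambda>_. borel) (\<lambda>i \<omega>. h (\<lambda>j\<in>{..<m}. X (i * m + j) \<omega>)) {0, 1}"
  proof (rule indep_vars_blocks)
    show "\<And>i j. i \<in> {0, 1} \<Longrightarrow> j < m \<Longrightarrow> i * m + j < n" using two_m_le by auto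
    fix i i' j j' assume "i \<in> {0::nat, 1}" "i' \<in> {0::nat, 1}" "j < m" "j' < m" "i * m + j = i' * m + j'"
    then show "i = i'" by auto
  qed (use h_meas in auto)
  have int: "integrable M (\<lambda>\<omega>. h (\<lambda>j\<in>{..<m}. X (i * m + j) \<omega>))" if "i \<in> {0::nat, 1}" for i
    using that two_m_le by (intro integrable_kernel_block) auto
  have "expectation (\<lambda>\<omega>. \<Prod>i\<in>{0::nat, 1}. h (\<lambda>j\<in>{..<m}. X (i * m + j) \<omega>))
      = (\<Prod>i\<in>{0::nat, 1}. expectation (\<lambda>\<omega>. h (\<lambda>j\<in>{..<m}. X (i * m + j) \<omega>)))"
    by (rule indep_vars_lebesgue_integral[OF _ ind int]) auto
  then show ?thesis
    using expectation_second_block[OF h_meas] unfolding kernel_mean_def by simp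
qed

lemma expectation_eta_eq_kernel_var:
  "expectation (\<lambda>\<omega>. eta h m (\<lambda>j\<in>{..<2*m}. X j \<omega>)) = kernel_var"
proof -
  define ha where "ha \<omega> = h (\<lambda>j\<in>{..<m}. X j \<omega>)" for \<omega>
  define hb where "hb \<omega> = h (\<lambda>j\<in>{..<m}. X (m + j) \<omega>)" for \<omega>
  let ?\<theta> = kernel_mean
  have intha: "integrable M ha" and inthb: "integrable M hb"
    unfolding ha_def hb_def using two_m_le by (auto intro!: integrable_kernel_block)
  have [measurable]: "ha \<in> borel_measurable M" "hb \<in> borel_measurable M"
    using intha inthb by auto
  have Bb: "(\<lambda>\<omega>. \<lambda>j\<in>{..<m}. X (m + j) \<omega>) \<in> M \<rightarrow>\<^sub>M PiM {..<m} (\<lambda>_. S)"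
    by (rule measurable_block) (use two_m_le in auto)
  have hr: "0 \<le> ha \<omega> \<and> ha \<omega> \<le> 1" "0 \<le> hb \<omega> \<and> hb \<omega> \<le> 1" if "\<omega> \<in> space M" for \<omega>
    unfolding ha_def hb_def
    using h_range[OF measurable_space[OF measurable_first_block that]] h_range[OF measurable_space[OF Bb that]]
    by auto
  have sq: "integrable M (\<lambda>\<omega>. (ha \<omega>)^2)" "integrable M (\<lambda>\<omega>. (hb \<omega>)^2)"
      "integrable M (\<lambda>\<omega>. ha \<omega> * hb \<omega>)"
    by (rule integrable_bounded_real[where B=1], use hr in \<open>auto simp: abs_square_le_1 abs_mult intro: mult_le_one\<close>)+
  have eB: "eta h m (\<lambda>j\<in>{..<2*m}. X j \<omega>) = (ha \<omega> - hb \<omega>)^2 / 2" for \<omega>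
  proof -
    have e1: "(\<lambda>j\<in>{..<m}. (\<lambda>j\<in>{..<2*m}. X j \<omega>) j) = (\<lambda>j\<in>{..<m}. X j \<omega>)"
      by (rule restrict_ext) auto
    have e2: "(\<lambda>j\<in>{..<m}. (\<lambda>j\<in>{..<2*m}. X j \<omega>) (m + j)) = (\<lambda>j\<in>{..<m}. X (m + j) \<omega>)"
      by (rule restrict_ext) auto
    show ?thesis unfolding eta_def e1 e2 ha_def hb_def ..
  qed
  have Eb2: "expectation (\<lambda>\<omega>. (hb \<omega>)^2) = expectation (\<lambda>\<omega>. (ha \<omega>)^2)"
    unfolding hb_def ha_def using h_meas by (intro expectation_second_block) measurable
  have "expectation (\<lambda>\<omega>. eta h m (\<lambda>j\<in>{..<2*m}. X j \<omega>))
      = expectation (\<lambda>\<omega>. (ha \<omega>)^2 / 2 + (hb \<omega>)^2 / 2 - ha \<omega> * hb \<omega>)"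
    unfolding eB by (intro Bochner_Integration.integral_cong refl) (simp add: power2_eq_square field_simps)
  also have "\<dots> = expectation (\<lambda>\<omega>. (ha \<omega>)^2) - ?\<theta> * ?\<theta>"
    using sq Eb2 expectation_product_of_halves by (simp add: ha_def hb_def)
  also have "\<dots> = expectation (\<lambda>\<omega>. (ha \<omega> - ?\<theta>)^2)"
  proof -
    have "expectation (\<lambda>\<omega>. (ha \<omega> - ?\<theta>)^2) = expectation (\<lambda>\<omega>. (ha \<omega>)^2 - 2 * ?\<theta> * ha \<omega> + ?\<theta> * ?\<theta>)"
      by (simp add: power2_eq_square algebra_simps)
    also have "\<dots> = expectation (\<lambda>\<omega>. (ha \<omega>)^2) - 2 * ?\<theta> * ?\<theta> + ?\<theta> * ?\<theta>"
      using sq(1) intha by (simp add: prob_space kernel_mean_def ha_def[symmetric])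
    finally show ?thesis by simp
  qed
  finally show ?thesis unfolding kernel_var_def ha_def .
qed

lemma expectation_eta_tilde:
  "expectation (\<lambda>\<omega>. eta_tilde h m (\<lambda>j\<in>{..<2*m}. X j \<omega>)) = kernel_var"
  using expectation_eta_tilde_eq_eta expectation_eta_eq_kernel_var by simp

lemma kernel_var_bounds: "0 \<le> kernel_var \<and> kernel_var \<le> 1/2"
proof -
  let ?Z = "\<lambda>\<omega>. eta_tilde h m (\<lambda>j\<in>{..<2*m}. X j \<omega>)"
  have Z: "0 \<le> ?Z \<omega> \<and> ?Z \<omega> \<le> 1/2" if "\<omega> \<in> space M" for \<omega>
    using eta_tilde_bounds[OF h_range measurable_space[OF measurable_double_block that]] .
  have "integrable M ?Z"
    using Z by (intro integrable_bounded_real[where B="1/2"] measurable_compose[OF measurable_double_block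
          eta_tilde_measurable[OF h_meas]]) auto
  then have "expectation ?Z \<le> expectation (\<lambda>_. 1/2 :: real)"
    using Z by (intro integral_mono) auto
  moreover have "0 \<le> expectation ?Z" using Z by (intro integral_nonneg_AE) auto
  ultimately show ?thesis unfolding expectation_eta_tilde by (simp add: prob_space)
qed

lemma ustat_upper_tail:
  assumes L: "L > 0"
  shows "prob {\<omega>\<in>space M. ustat h m n (\<lambda>i. X i \<omega>) - kernel_mean
            \<ge> sqrt (2 * kernel_var * L / real (n div m)) + 2 * L / (3 * real (n div m))} \<le> exp (- L)"
proof -
  have "0 \<le> kernel_mean"
    unfolding kernel_mean_def
    using h_range measurable_space[OF measurable_first_block] by (auto intro!: integral_nonneg_AE)
  then have "h x - kernel_mean \<le> 1" if "x \<in> space (PiM {..<m} (\<lambda>_. S))" for x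
    using h_range[OF that] by linarith
  then show ?thesis
    using ustat_bernstein_tail[OF h_meas _ h_sym m_pos _ _ _ _ L, of 1 1 kernel_var] h_range two_m_le
    by (simp add: kernel_mean_def[symmetric] kernel_var_def[symmetric])
qed

lemma neg_eta_tilde_properties:
  shows "(\<lambda>x. - eta_tilde h m x) \<in> borel_measurable (PiM {..<2*m} (\<lambda>_. S))"
    and "\<And>x. x \<in> space (PiM {..<2*m} (\<lambda>_. S)) \<Longrightarrow> - 1/2 \<le> - eta_tilde h m x \<and> - eta_tilde h m x \<le> 0"
    and "sym_kernel S (2*m) (\<lambda>x. - eta_tilde h m x)"
    and "expectation (\<lambda>\<omega>. - eta_tilde h m (\<lambda>j\<in>{..<2*m}. X j \<omega>)) = - kernel_var"
    and "\<And>Y. ustat (\<lambda>x. - eta_tilde h m x) (2*m) n Y = - ustat (eta_tilde h m) (2*m) n Y"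
  using eta_tilde_measurable[OF h_meas] eta_tilde_bounds[where h=h and m=m and S=S, OF h_range] sym_kernel_eta_tilde[of S m h]
    expectation_eta_tilde ustat_affine[OF two_m_le, of 0 "-1" "eta_tilde h m"]
  by (auto simp: sym_kernel_def)

lemma eta_tilde_ustat_lower_tail_hoeffding:
  assumes L: "L > 0"
  shows "prob {\<omega>\<in>space M. kernel_var - ustat (eta_tilde h m) (2*m) n (\<lambda>i. X i \<omega>)
            \<ge> sqrt (L / (8 * real (n div (2*m))))} \<le> exp (- L)"
proof -
  have "(0 - - 1/2)^2 * L / (2 * real (n div (2*m))) = L / (8 * real (n div (2*m)))"
    by (simp add: power2_eq_square)
  then show ?thesis
    using ustat_hoeffding_tail[OF neg_eta_tilde_properties(1,2) _ neg_eta_tilde_properties(3) _ two_m_le L]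
      m_pos
    by (simp add: neg_eta_tilde_properties(5) expectation_eta_tilde)
qed

lemma eta_tilde_ustat_lower_tail_bernstein:
  assumes L: "L > 0"
  shows "prob {\<omega>\<in>space M. kernel_var - ustat (eta_tilde h m) (2*m) n (\<lambda>i. X i \<omega>)
            \<ge> sqrt (kernel_var * L / real (n div (2*m))) + L / (3 * real (n div (2*m)))} \<le> exp (- L)"
proof -
  let ?Z = "\<lambda>\<omega>. eta_tilde h m (\<lambda>j\<in>{..<2*m}. X j \<omega>)"
  have "expectation (\<lambda>\<omega>. (- ?Z \<omega> - - kernel_var)^2) \<le> kernel_var / 2"
  proof -
    have "expectation (\<lambda>\<omega>. (?Z \<omega> - kernel_var)^2) \<le> kernel_var / 2"
      using eta_tilde_bounds[OF h_range measurable_space[OF measurable_double_block]]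
      by (intro variance_le_half_mean measurable_compose[OF measurable_double_block
            eta_tilde_measurable[OF h_meas]]) (auto simp: expectation_eta_tilde)
    then show ?thesis by (simp add: power2_eq_square algebra_simps)
  qed
  moreover have "- eta_tilde h m x - - kernel_var \<le> 1/2" if "x \<in> space (PiM {..<2*m} (\<lambda>_. S))" for x
    using kernel_var_bounds neg_eta_tilde_properties(2)[OF that] by linarith
  moreover have "\<bar>- eta_tilde h m x\<bar> \<le> 1/2" if "x \<in> space (PiM {..<2*m} (\<lambda>_. S))" for x
    using neg_eta_tilde_properties(2)[OF that] by linarith
  ultimately show ?thesis
    using ustat_bernstein_tail[OF neg_eta_tilde_properties(1) _ neg_eta_tilde_properties(3) _ two_m_le _ _ _ L,
        of "1/2" "1/2" "kernel_var / 2"] m_pos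
    by (simp add: neg_eta_tilde_properties(5) expectation_eta_tilde)
qed

text \<open>Outside both tail events of probability \<open>\<delta>/2\<close>, the comparison lemma turns the
  Bernstein bound with the true variance into one with the empirical variance.\<close>

lemma ustat_upper_bound_of_variance_tail:
  fixes \<delta> T :: real and bound :: "real \<Rightarrow> real"
  defines "L \<equiv> ln (2 / \<delta>)"
  assumes \<delta>: "0 < \<delta>" "\<delta> < 1" and bound: "continuous_on UNIV bound"
    and tail: "prob {\<omega>\<in>space M. kernel_var - ustat (eta_tilde h m) (2*m) n (\<lambda>i. X i \<omega>) \<ge> T} \<le> exp (- L)"
    and compare: "\<And>w. 0 \<le> w \<Longrightarrow> kernel_var - w < T \<Longrightarrow>
                    sqrt (2 * kernel_var * L / real (n div m)) + 2 * L / (3 * real (n div m)) \<le> bound w"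
  shows "prob {\<omega>\<in>space M. ustat h m n (\<lambda>i. X i \<omega>) - kernel_mean
            \<le> bound (ustat (eta_tilde h m) (2*m) n (\<lambda>i. X i \<omega>))} \<ge> 1 - \<delta>"
proof -
  define U where "U \<omega> = ustat h m n (\<lambda>i. X i \<omega>)" for \<omega>
  define W where "W \<omega> = ustat (eta_tilde h m) (2*m) n (\<lambda>i. X i \<omega>)" for \<omega>
  have L: "L > 0" and eL: "exp (- L) = \<delta> / 2" using \<delta> by (simp_all add: L_def exp_minus)
  have [measurable]: "U \<in> borel_measurable M" "W \<in> borel_measurable M"
    unfolding U_def[abs_def] W_def[abs_def]
    by (intro measurable_ustat h_meas eta_tilde_measurable)+
  have [measurable]: "bound \<in> borel_measurable borel"
    by (rule borel_measurable_continuous_onI[OF bound])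
  have W0: "0 \<le> W \<omega>" if "\<omega> \<in> space M" for \<omega>
  proof -
    have "X i \<omega> \<in> space S" if "i < n" for i using measurable_space[OF X_meas[OF that] \<open>\<omega> \<in> space M\<close>] .
    then show ?thesis
      unfolding W_def using eta_tilde_bounds[where h=h and m=m and S=S, OF h_range] by (intro ustat_nonneg) auto
  qed
  show ?thesis
    unfolding U_def[symmetric] W_def[symmetric]
  proof (rule prob_ge_one_minus_of_two_exceptions)
    show "prob {\<omega>\<in>space M. U \<omega> - kernel_mean
            \<ge> sqrt (2 * kernel_var * L / real (n div m)) + 2 * L / (3 * real (n div m))} \<le> \<delta> / 2"
      using ustat_upper_tail[OF L] eL by (simp add: U_def)
    show "prob {\<omega>\<in>space M. kernel_var - W \<omega> \<ge> T} \<le> \<delta> / 2"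
      using tail eL by (simp add: W_def)
  next
    fix \<omega> assume "\<omega> \<in> space M" "\<not> U \<omega> - kernel_mean \<le> bound (W \<omega>)"
    then show "\<omega> \<in> {\<omega>\<in>space M. U \<omega> - kernel_mean
                  \<ge> sqrt (2 * kernel_var * L / real (n div m)) + 2 * L / (3 * real (n div m))} \<or>
               \<omega> \<in> {\<omega>\<in>space M. kernel_var - W \<omega> \<ge> T}"
      using compare[OF W0] by force
  qed measurable
qed

lemma ustat_upper_bounds:
  fixes \<delta> :: real
  defines "k \<equiv> n div m" and "k' \<equiv> n div (2 * m)" and "L \<equiv> ln (2 / \<delta>)"
  assumes \<delta>: "0 < \<delta>" "\<delta> < 1"
  shows "prob {\<omega>\<in>space M. ustat h m n (\<lambda>i. X i \<omega>) - kernel_mean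
            \<le> boundH k k' L (ustat (eta_tilde h m) (2*m) n (\<lambda>i. X i \<omega>))} \<ge> 1 - \<delta>"
    and "prob {\<omega>\<in>space M. ustat h m n (\<lambda>i. X i \<omega>) - kernel_mean
            \<le> boundB k k' L (ustat (eta_tilde h m) (2*m) n (\<lambda>i. X i \<omega>))} \<ge> 1 - \<delta>"
proof -
  have k: "k > 0" "k' > 0" using m_pos two_m_le by (auto simp: k_def k'_def div_greater_zero_iff)
  have L: "L > 0" using \<delta> by (simp add: L_def)
  show "prob {\<omega>\<in>space M. ustat h m n (\<lambda>i. X i \<omega>) - kernel_mean
            \<le> boundH k k' L (ustat (eta_tilde h m) (2*m) n (\<lambda>i. X i \<omega>))} \<ge> 1 - \<delta>"
    unfolding L_def
  proof (rule ustat_upper_bound_of_variance_tail[OF \<delta> _ eta_tilde_ustat_lower_tail_hoeffding])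
    show "continuous_on UNIV (boundH k k' (ln (2 / \<delta>)))"
      unfolding boundH_def[abs_def] using k by (intro continuous_intros) auto
  qed (use bernstein_threshold_le_boundH[OF k L kernel_var_bounds[THEN conjunct1]] L
       in \<open>auto simp: k_def k'_def L_def\<close>)
  show "prob {\<omega>\<in>space M. ustat h m n (\<lambda>i. X i \<omega>) - kernel_mean
            \<le> boundB k k' L (ustat (eta_tilde h m) (2*m) n (\<lambda>i. X i \<omega>))} \<ge> 1 - \<delta>"
    unfolding L_def
  proof (rule ustat_upper_bound_of_variance_tail[OF \<delta> _ eta_tilde_ustat_lower_tail_bernstein])
    show "continuous_on UNIV (boundB k k' (ln (2 / \<delta>)))"
      unfolding boundB_def[abs_def] using k by (intro continuous_intros) auto
  qed (use bernstein_threshold_le_boundB[OF k L kernel_var_bounds[THEN conjunct1]] L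
       in \<open>auto simp: k_def k'_def L_def\<close>)
qed

lemma ustat_lower_bounds:
  fixes \<delta> :: real
  defines "k \<equiv> n div m" and "k' \<equiv> n div (2 * m)" and "L \<equiv> ln (2 / \<delta>)"
  assumes \<delta>: "0 < \<delta>" "\<delta> < 1"
  shows "prob {\<omega>\<in>space M. kernel_mean - ustat h m n (\<lambda>i. X i \<omega>)
            \<le> boundH k k' L (ustat (eta_tilde h m) (2*m) n (\<lambda>i. X i \<omega>))} \<ge> 1 - \<delta>"
    and "prob {\<omega>\<in>space M. kernel_mean - ustat h m n (\<lambda>i. X i \<omega>)
            \<le> boundB k k' L (ustat (eta_tilde h m) (2*m) n (\<lambda>i. X i \<omega>))} \<ge> 1 - \<delta>"
proof -
  interpret flip: iid_kernel M S X n "\<lambda>x. 1 - h x" m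
    using h_meas h_range h_sym m_pos two_m_le by unfold_locales (auto simp: sym_kernel_def)
  have "integrable M (\<lambda>\<omega>. h (\<lambda>j\<in>{..<m}. X j \<omega>))"
    using two_m_le by (intro integrable_kernel_block) auto
  then have "flip.kernel_mean = 1 - kernel_mean"
    unfolding flip.kernel_mean_def kernel_mean_def by (simp add: prob_space)
  moreover have "ustat (\<lambda>x. 1 - h x) m n Y = 1 - ustat h m n Y" for Y
    using ustat_affine[of m n 1 "-1" h Y] two_m_le by simp
  ultimately show "prob {\<omega>\<in>space M. kernel_mean - ustat h m n (\<lambda>i. X i \<omega>)
            \<le> boundH k k' L (ustat (eta_tilde h m) (2*m) n (\<lambda>i. X i \<omega>))} \<ge> 1 - \<delta>"
    and "prob {\<omega>\<in>space M. kernel_mean - ustat h m n (\<lambda>i. X i \<omega>)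
            \<le> boundB k k' L (ustat (eta_tilde h m) (2*m) n (\<lambda>i. X i \<omega>))} \<ge> 1 - \<delta>"
    using flip.ustat_upper_bounds[OF \<delta>] unfolding k_def k'_def L_def eta_tilde_one_minus by simp_all
qed

lemma ustat_eta_eq_ustat_eta_tilde:
  assumes "sym_kernel S (2 * m) (eta h m)" and "\<omega> \<in> space M"
  shows "ustat (eta h m) (2 * m) n (\<lambda>i. X i \<omega>) = ustat (eta_tilde h m) (2 * m) n (\<lambda>i. X i \<omega>)"
  by (rule ustat_cong)
     (use eta_tilde_eq_eta[OF assms(1)] measurable_space[OF X_meas assms(2)] in auto)

end

theorem theorem1:
  fixes M :: "'w measure" and Xset :: "(real ^ 'd) set" and X :: "nat \<Rightarrow> 'w \<Rightarrow> real ^ 'd"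
    and h :: "(nat \<Rightarrow> real ^ 'd) \<Rightarrow> real" and m n :: nat and \<delta> :: real
  defines "S \<equiv> restrict_space borel Xset"
  assumes "prob_space M"
    and X_meas: "\<And>i. i < n \<Longrightarrow> X i \<in> M \<rightarrow>\<^sub>M S"
    and indep: "prob_space.indep_vars M (\<lambda>_. S) X {..<n}"
    and ident: "\<And>i. i < n \<Longrightarrow> distr M S (X i) = distr M S (X 0)"
    and h_meas: "h \<in> borel_measurable (PiM {..<m} (\<lambda>_. S))"
    and h_range: "\<And>x. x \<in> space (PiM {..<m} (\<lambda>_. S)) \<Longrightarrow> 0 \<le> h x \<and> h x \<le> 1"
    and h_sym: "sym_kernel S m h"
    and "1 \<le> m" and "2 * m \<le> n" and "0 < \<delta>" and "\<delta> < 1"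
  shows
   "let k = n div m; k' = n div (2 * m); L = ln (2 / \<delta>);
        \<theta> = prob_space.expectation M (\<lambda>\<omega>. h (\<lambda>j\<in>{..<m}. X j \<omega>));
        U = (\<lambda>\<omega>. ustat h m n (\<lambda>i. X i \<omega>));
        W = (\<lambda>\<omega>. ustat (eta h m) (2 * m) n (\<lambda>i. X i \<omega>));
        Wt = (\<lambda>\<omega>. ustat (eta_tilde h m) (2 * m) n (\<lambda>i. X i \<omega>));
        P = measure M
    in (sym_kernel S (2 * m) (eta h m) \<longrightarrow>
          P {\<omega>\<in>space M. U \<omega> - \<theta> \<le> boundH k k' L (W \<omega>)} \<ge> 1 - \<delta> \<and>
          P {\<omega>\<in>space M. U \<omega> - \<theta> \<le> boundB k k' L (W \<omega>)} \<ge> 1 - \<delta> \<and>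
          P {\<omega>\<in>space M. \<theta> - U \<omega> \<le> boundH k k' L (W \<omega>)} \<ge> 1 - \<delta> \<and>
          P {\<omega>\<in>space M. \<theta> - U \<omega> \<le> boundB k k' L (W \<omega>)} \<ge> 1 - \<delta>) \<and>
       P {\<omega>\<in>space M. U \<omega> - \<theta> \<le> boundH k k' L (Wt \<omega>)} \<ge> 1 - \<delta> \<and>
       P {\<omega>\<in>space M. U \<omega> - \<theta> \<le> boundB k k' L (Wt \<omega>)} \<ge> 1 - \<delta> \<and>
       P {\<omega>\<in>space M. \<theta> - U \<omega> \<le> boundH k k' L (Wt \<omega>)} \<ge> 1 - \<delta> \<and>
       P {\<omega>\<in>space M. \<theta> - U \<omega> \<le> boundB k k' L (Wt \<omega>)} \<ge> 1 - \<delta>"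
proof -
  interpret iid_kernel M S X n h m
    by (intro iid_kernel.intro iid_seq.intro iid_seq_axioms.intro iid_kernel_axioms.intro assms)
  show ?thesis
    unfolding Let_def kernel_mean_def[symmetric]
    using ustat_upper_bounds[OF \<open>0 < \<delta>\<close> \<open>\<delta> < 1\<close>] ustat_lower_bounds[OF \<open>0 < \<delta>\<close> \<open>\<delta> < 1\<close>]
    by (simp add: ustat_eta_eq_ustat_eta_tilde cong: conj_cong)
qed

end
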